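(* Let $1\le k\le e-1$. For any two distinct $x,y\in X$, the least upper bound $x\vee y$ of $x$ and $y$ in the poset $([1,\lambda^k],\preceq)$ exists, and it is also the least upper bound of $x,y$ in $([1,\lambda^k],\preceq_r)$. Explicitly (indices of $t$ taken in $\mathbb{Z}/e\mathbb{Z}$): $t_i\vee t_j=t_kt_0=t_it_{i-k}=t_jt_{j-k}$ for $i\neq j$; $t_i\vee s_3=t_is_3t_i=s_3t_is_3$; $t_i\vee s_j=t_is_j=s_jt_i$ for $4\le j\le n$; $s_i\vee s_{i+1}=s_is_{i+1}s_i=s_{i+1}s_is_{i+1}$ for $3\le i\le n-1$; $s_i\vee s_j=s_is_j=s_js_i$ for $3\le i,j\le n$, $|i-j|>1$.
   Context: Let $e\ge 2$, $n\ge 2$, $\zeta_e=e^{2\pi i/e}$. $G(e,e,n)$ is the group of $n\times n$ monomial matrices with nonzero entries $e$-th roots of unity whose product is $1$. For $i\in\mathbb{Z}/e\mathbb{Z}$, $t_i$ is the matrix with $(1,2)$ entry $\zeta_e^{-i}$, $(2,1)$ entry $\zeta_e^{i}$, $(j,j)$ entry $1$ for $3\le j\le n$, other entries $0$; for $3\le j\le n$, $s_j$ is the permutation matrix of the transposition $(j-1\ j)$. $X=\{t_0,\dots,t_{e-1},s_3,\dots,s_n\}$ and $\ell$ is the word length with respect to $X$. For $u,w\in G(e,e,n)$ write $u\preceq w$ if $\ell(u)+\ell(u^{-1}w)=\ell(w)$, and $u\preceq_r w$ if $\ell(wu^{-1})+\ell(u)=\ell(w)$. $[1,g]=\{w: w\preceq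 g\}$. $\lambda=\mathrm{diag}(\zeta_e^{-(n-1)},\zeta_e,\dots,\zeta_e)$. *)

theory Defs
  imports Complex_Main "Jordan_Normal_Form.Matrix"
begin

text \<open>Matrices are n x n complex matrices (JNF type), indices 0-based:
  paper row/column a (1-based) is index a-1 here.\<close>

definition zeta_pow :: "nat \<Rightarrow> int \<Rightarrow> complex" where
  "zeta_pow e m = cis (2 * pi * of_int m / of_nat e)"

definition Geen :: "nat \<Rightarrow> nat \<Rightarrow> complex mat set" where
  "Geen e n = {A. A \<in> carrier_mat n n
      \<and> (\<forall>a<n. \<exists>!b. b < n \<and> A $$ (a,b) \<noteq> 0)
      \<and> (\<forall>b<n. \<exists>!a. a < n \<and> A $$ (a,b) \<noteq> 0)
      \<and> (\<forall>a<n. \<forall>b<n. A $$ (a,b) \<noteq> 0 \<longrightarrow> (A $$ (a,b)) ^ e = 1)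
      \<and> (\<Prod>p\<in>{(a,b). a < n \<and> b < n \<and> A $$ (a,b) \<noteq> 0}. A $$ p) = 1}"

text \<open>t_i (index i in Z, only its class mod e matters).\<close>
definition tgen :: "nat \<Rightarrow> nat \<Rightarrow> int \<Rightarrow> complex mat" where
  "tgen e n i = mat n n (\<lambda>(a,b).
     if a = 0 \<and> b = 1 then zeta_pow e (- i)
     else if a = 1 \<and> b = 0 then zeta_pow e i
     else if a = b \<and> 2 \<le> a then 1 else 0)"

text \<open>s_j for 3 <= j <= n: permutation matrix of the transposition (j-1 j)
  (1-based), i.e. swapping 0-based indices j-2 and j-1.\<close>
definition sgen :: "nat \<Rightarrow> nat \<Rightarrow> complex mat" where
  "sgen n j = mat n n (\<lambda>(a,b).
     if (a = j - 2 \<and> b = j - 1) \<or> (a = j - 1 \<and> b = j - 2) then 1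
     else if a = b \<and> a \<noteq> j - 2 \<and> a \<noteq> j - 1 then 1 else 0)"

definition Xgen :: "nat \<Rightarrow> nat \<Rightarrow> complex mat set" where
  "Xgen e n = {tgen e n (int i) | i. i < e} \<union> {sgen n j | j. 3 \<le> j \<and> j \<le> n}"

definition word_prod :: "nat \<Rightarrow> complex mat list \<Rightarrow> complex mat" where
  "word_prod n ws = foldr (*) ws (1\<^sub>m n)"

definition wlen :: "nat \<Rightarrow> nat \<Rightarrow> complex mat \<Rightarrow> nat" where
  "wlen e n w = (LEAST m. \<exists>ws. set ws \<subseteq> Xgen e n \<and> length ws = m \<and> word_prod n ws = w)"

definition ginv :: "nat \<Rightarrow> nat \<Rightarrow> complex mat \<Rightarrow> complex mat" where
  "ginv e n u = (THE v. v \<in> Geen e n \<and> u * v = 1\<^sub>m n)"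

definition prefix_le :: "nat \<Rightarrow> nat \<Rightarrow> complex mat \<Rightarrow> complex mat \<Rightarrow> bool" where
  "prefix_le e n u w \<longleftrightarrow> u \<in> Geen e n \<and> w \<in> Geen e n \<and>
     wlen e n u + wlen e n (ginv e n u * w) = wlen e n w"

definition suffix_le :: "nat \<Rightarrow> nat \<Rightarrow> complex mat \<Rightarrow> complex mat \<Rightarrow> bool" where
  "suffix_le e n u w \<longleftrightarrow> u \<in> Geen e n \<and> w \<in> Geen e n \<and>
     wlen e n (w * ginv e n u) + wlen e n u = wlen e n w"

definition interval :: "nat \<Rightarrow> nat \<Rightarrow> complex mat \<Rightarrow> complex mat set" where
  "interval e n g = {w \<in> Geen e n. prefix_le e n w g}"

definition lam :: "nat \<Rightarrow> nat \<Rightarrow> complex mat" where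
  "lam e n = mat n n (\<lambda>(a,b). if a = b then
      (if a = 0 then zeta_pow e (- (int n - 1)) else zeta_pow e 1) else 0)"

definition is_lub :: "('a \<Rightarrow> 'a \<Rightarrow> bool) \<Rightarrow> 'a set \<Rightarrow> 'a \<Rightarrow> 'a \<Rightarrow> 'a \<Rightarrow> bool" where
  "is_lub R S x y z \<longleftrightarrow> z \<in> S \<and> R x z \<and> R y z \<and>
     (\<forall>w\<in>S. R x w \<and> R y w \<longrightarrow> R z w)"

definition lub_both :: "nat \<Rightarrow> nat \<Rightarrow> nat \<Rightarrow> complex mat \<Rightarrow> complex mat \<Rightarrow> complex mat \<Rightarrow> bool" where
  "lub_both e n k x y z \<longleftrightarrow>
     is_lub (prefix_le e n) (interval e n (lam e n ^\<^sub>m k)) x y z \<and>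
     is_lub (suffix_le e n) (interval e n (lam e n ^\<^sub>m k)) x y z"

end

theory Submission
  imports Defs
begin

text \<open>An element of \<open>G(e,e,n)\<close> is a monomial matrix, encoded by a permutation \<open>p\<close> and
  exponents \<open>x\<close>. Its length with respect to \<open>X\<close> is a sum over pairs of rows \<open>a < b\<close>: one if
  \<open>p\<close> inverts the pair, and otherwise zero or two according to whether the entry in row \<open>b\<close> is
  trivial. Left multiplication by a generator changes only the term of one pair, so a generator
  is a prefix of \<open>w\<close> exactly when it lowers that term. Each candidate join is then shown to be a
  prefix of every common upper bound by checking that these descents persist along it; for two
  \<open>t\<close>'s this uses that below \<open>\<lambda>\<^sup>k\<close> the nontrivial entry in row 1 must be \<open>\<zeta>\<^sup>k\<close>. Since all
  generators and joins are involutions, the suffix order follows by inversion.\<close>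

lemma zeta_pow_add: "zeta_pow e a * zeta_pow e b = zeta_pow e (a + b)"
  unfolding zeta_pow_def cis_mult by (simp add: add_divide_distrib distrib_left)

lemma zeta_pow_nonzero [simp]: "zeta_pow e a \<noteq> 0"
  by (simp add: zeta_pow_def)

lemma zeta_pow_0 [simp]: "zeta_pow e 0 = 1"
  by (simp add: zeta_pow_def)

lemma zeta_pow_mod:
  assumes "0 < e"
  shows "zeta_pow e (a mod int e) = zeta_pow e a"
proof -
  have "2 * pi * of_int (int e * (a div int e)) / of_nat e = 2 * pi * real_of_int (a div int e)"
    using assms by simp
  then have "zeta_pow e (int e * (a div int e)) = 1"
    unfolding zeta_pow_def by simp
  moreover have "a = a mod int e + int e * (a div int e)"
    by simp
  ultimately show ?thesis
    by (metis mult.right_neutral zeta_pow_add)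
qed

lemma zeta_pow_eq_iff:
  assumes "0 < e"
  shows "zeta_pow e a = zeta_pow e b \<longleftrightarrow> a mod int e = b mod int e"
proof
  assume eq: "zeta_pow e a = zeta_pow e b"
  define a' b' where "a' = nat (a mod int e)" and "b' = nat (b mod int e)"
  have a': "a' < e" "int a' = a mod int e" and b': "b' < e" "int b' = b mod int e"
    using assms by (auto simp: a'_def b'_def nat_less_iff)
  have "zeta_pow e (int a') = zeta_pow e (int b')"
    using eq zeta_pow_mod[OF assms, of a] zeta_pow_mod[OF assms, of b] a' b' by simp
  then have "cis (2 * pi * real a' / real e) = cis (2 * pi * real b' / real e)"
    by (simp add: zeta_pow_def)
  moreover have "inj_on (\<lambda>k. cis (2 * pi * real k / real e)) {..<e}"
    using bij_betw_roots_unity[OF assms] by (simp add: bij_betw_def)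
  ultimately have "a' = b'"
    using a' b' by (auto dest: inj_onD)
  then show "a mod int e = b mod int e"
    using a' b' by simp
qed (metis zeta_pow_mod[OF assms])

lemma zeta_pow_eq_1_iff: "0 < e \<Longrightarrow> zeta_pow e a = 1 \<longleftrightarrow> int e dvd a"
  using zeta_pow_eq_iff[of e a 0] by (simp add: dvd_eq_mod_eq_0)

lemma root_of_unity_eq_zeta_pow:
  assumes "0 < e" "z ^ e = 1"
  obtains m where "z = zeta_pow e m"
proof -
  obtain k where "z = cis (2 * pi * real k / real e)"
    using bij_betw_roots_unity[OF assms(1)] assms(2) by (auto simp: bij_betw_def)
  then show ?thesis
    using that[of "int k"] by (simp add: zeta_pow_def)
qed

lemma zeta_pow_power_e: "0 < e \<Longrightarrow> zeta_pow e m ^ e = 1"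
  by (simp add: zeta_pow_def DeMoivre)

lemma prod_zeta_pow: "(\<Prod>a<(n::nat). zeta_pow e (x a)) = zeta_pow e (\<Sum>a<n. x a)"
  by (induction n) (auto simp: zeta_pow_add)

section \<open>Monomial matrices\<close>

definition mono_mat :: "nat \<Rightarrow> nat \<Rightarrow> (nat \<Rightarrow> nat) \<Rightarrow> (nat \<Rightarrow> int) \<Rightarrow> complex mat" where
  "mono_mat e n p x = mat n n (\<lambda>(a, b). if b = p a then zeta_pow e (x a) else 0)"

definition mono_data :: "nat \<Rightarrow> nat \<Rightarrow> (nat \<Rightarrow> nat) \<Rightarrow> (nat \<Rightarrow> int) \<Rightarrow> bool" where
  "mono_data e n p x \<longleftrightarrow> bij_betw p {..<n} {..<n} \<and> int e dvd (\<Sum>a<n. x a)"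

lemma mono_mat_carrier [simp]: "mono_mat e n p x \<in> carrier_mat n n"
  and dim_mono_mat [simp]: "dim_row (mono_mat e n p x) = n" "dim_col (mono_mat e n p x) = n"
  by (simp_all add: mono_mat_def)

lemma mono_mat_index:
  "a < n \<Longrightarrow> b < n \<Longrightarrow> mono_mat e n p x $$ (a, b) = (if b = p a then zeta_pow e (x a) else 0)"
  by (simp add: mono_mat_def)

lemma one_mat_eq_mono_mat: "1\<^sub>m n = mono_mat e n id (\<lambda>_. 0)"
  by (rule eq_matI) (auto simp: mono_mat_def)

lemma mono_mat_mult:
  assumes "\<forall>a<n. p a < n"
  shows "mono_mat e n p x * mono_mat e n q y = mono_mat e n (q \<circ> p) (\<lambda>a. x a + y (p a))"
proof (rule eq_matI)
  fix a c assume "a < dim_row (mono_mat e n (q \<circ> p) (\<lambda>a. x a + y (p a)))"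
    "c < dim_col (mono_mat e n (q \<circ> p) (\<lambda>a. x a + y (p a)))"
  then have a: "a < n" and c: "c < n" by auto
  have "(mono_mat e n p x * mono_mat e n q y) $$ (a, c) =
      (\<Sum>d\<in>{0..<n}. mono_mat e n p x $$ (a, d) * mono_mat e n q y $$ (d, c))"
    using a c by (simp add: scalar_prod_def)
  also have "\<dots> = (\<Sum>d\<in>{0..<n}. if d = p a then zeta_pow e (x a) * mono_mat e n q y $$ (d, c) else 0)"
    by (rule sum.cong) (auto simp: mono_mat_index a)
  also have "\<dots> = mono_mat e n (q \<circ> p) (\<lambda>a. x a + y (p a)) $$ (a, c)"
    using assms a c by (simp add: mono_mat_index zeta_pow_add)
  finally show "(mono_mat e n p x * mono_mat e n q y) $$ (a, c) =
      mono_mat e n (q \<circ> p) (\<lambda>a. x a + y (p a)) $$ (a, c)" .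
qed auto

lemma mono_mat_eq_iff:
  assumes "0 < e" "\<forall>a<n. p a < n" "\<forall>a<n. q a < n"
  shows "mono_mat e n p x = mono_mat e n q y \<longleftrightarrow> (\<forall>a<n. p a = q a \<and> x a mod int e = y a mod int e)"
proof
  assume eq: "mono_mat e n p x = mono_mat e n q y"
  show "\<forall>a<n. p a = q a \<and> x a mod int e = y a mod int e"
  proof (intro allI impI)
    fix a assume a: "a < n"
    have "zeta_pow e (x a) = (if p a = q a then zeta_pow e (y a) else 0)"
      using arg_cong[OF eq, of "\<lambda>A. A $$ (a, p a)"] a assms by (simp add: mono_mat_index)
    then show "p a = q a \<and> x a mod int e = y a mod int e"
      using zeta_pow_eq_iff[OF assms(1)] by (auto split: if_splits)
  qed
next
  assume "\<forall>a<n. p a = q a \<and> x a mod int e = y a mod int e"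
  then show "mono_mat e n p x = mono_mat e n q y"
    by (intro eq_matI) (auto simp: mono_mat_index zeta_pow_eq_iff[OF assms(1)])
qed

lemma mono_mat_in_Geen:
  assumes "0 < e" "mono_data e n p x"
  shows "mono_mat e n p x \<in> Geen e n"
proof -
  let ?A = "mono_mat e n p x"
  have bij: "bij_betw p {..<n} {..<n}" and dvd: "int e dvd (\<Sum>a<n. x a)"
    using assms(2) by (auto simp: mono_data_def)
  have pn: "a < n \<Longrightarrow> p a < n" for a
    using bij by (auto simp: bij_betw_def)
  have row: "\<exists>!b. b < n \<and> ?A $$ (a, b) \<noteq> 0" if a: "a < n" for a
  proof (rule ex1I[of _ "p a"])
    show "p a < n \<and> ?A $$ (a, p a) \<noteq> 0"
      using a pn by (simp add: mono_mat_index)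
  qed (use a in \<open>auto simp: mono_mat_index split: if_splits\<close>)
  have col: "\<exists>!a. a < n \<and> ?A $$ (a, b) \<noteq> 0" if b: "b < n" for b
  proof -
    obtain a where a: "a < n" "p a = b"
      using bij b by (metis bij_betw_imp_surj_on imageE lessThan_iff)
    show ?thesis
    proof (rule ex1I[of _ a])
      show "a < n \<and> ?A $$ (a, b) \<noteq> 0"
        using a b by (simp add: mono_mat_index)
      fix a' assume "a' < n \<and> ?A $$ (a', b) \<noteq> 0"
      then have "a' < n" "p a' = b"
        using b by (auto simp: mono_mat_index split: if_splits)
      then show "a' = a"
        using a bij by (auto simp: bij_betw_def inj_on_def)
    qed
  qed
  have roots: "\<forall>a<n. \<forall>b<n. ?A $$ (a, b) \<noteq> 0 \<longrightarrow> (?A $$ (a, b)) ^ e = 1"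
    using zeta_pow_power_e[OF assms(1)] by (auto simp: mono_mat_index)
  have S: "{(a, b). a < n \<and> b < n \<and> ?A $$ (a, b) \<noteq> 0} = (\<lambda>a. (a, p a)) ` {..<n}"
    using pn by (auto simp: mono_mat_index split: if_splits)
  have "(\<Prod>q\<in>{(a, b). a < n \<and> b < n \<and> ?A $$ (a, b) \<noteq> 0}. ?A $$ q) = (\<Prod>a<n. ?A $$ (a, p a))"
    unfolding S by (subst prod.reindex) (auto simp: inj_on_def)
  also have "\<dots> = (\<Prod>a<n. zeta_pow e (x a))"
    by (rule prod.cong) (auto simp: mono_mat_index pn)
  also have "\<dots> = 1"
    using prod_zeta_pow zeta_pow_eq_1_iff[OF assms(1)] dvd by simp
  finally show ?thesis
    unfolding Geen_def using row col roots by auto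
qed

lemma Geen_elim:
  assumes "0 < e" "A \<in> Geen e n"
  obtains p x where "mono_data e n p x" "A = mono_mat e n p x"
proof -
  have car: "A \<in> carrier_mat n n"
    and row: "\<forall>a<n. \<exists>!b. b < n \<and> A $$ (a, b) \<noteq> 0"
    and col: "\<forall>b<n. \<exists>!a. a < n \<and> A $$ (a, b) \<noteq> 0"
    and roots: "\<forall>a<n. \<forall>b<n. A $$ (a, b) \<noteq> 0 \<longrightarrow> (A $$ (a, b)) ^ e = 1"
    and prod: "(\<Prod>q\<in>{(a, b). a < n \<and> b < n \<and> A $$ (a, b) \<noteq> 0}. A $$ q) = 1"
    using assms(2) unfolding Geen_def by auto
  define p where "p a = (THE b. b < n \<and> A $$ (a, b) \<noteq> 0)" for a
  have p: "p a < n \<and> A $$ (a, p a) \<noteq> 0" if "a < n" for a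
    unfolding p_def using theI'[OF row[rule_format, OF that]] .
  have p_unique: "b = p a" if "a < n" "b < n" "A $$ (a, b) \<noteq> 0" for a b
    using row[rule_format, OF that(1)] p[OF that(1)] that by blast
  define x where "x a = (SOME m. A $$ (a, p a) = zeta_pow e m)" for a
  have x: "A $$ (a, p a) = zeta_pow e (x a)" if a: "a < n" for a
  proof -
    obtain m where "A $$ (a, p a) = zeta_pow e m"
      using root_of_unity_eq_zeta_pow[OF assms(1)] roots p[OF a] a by blast
    then show ?thesis
      unfolding x_def by (rule someI)
  qed
  have A: "A = mono_mat e n p x"
  proof (rule eq_matI)
    fix a b assume "a < dim_row (mono_mat e n p x)" "b < dim_col (mono_mat e n p x)"
    then have ab: "a < n" "b < n" by auto
    show "A $$ (a, b) = mono_mat e n p x $$ (a, b)"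
      using p_unique[OF ab] x[OF ab(1)] ab by (cases "b = p a") (auto simp: mono_mat_index)
  qed (use car in auto)
  have inj: "inj_on p {..<n}"
  proof (rule inj_onI)
    fix a a' assume "a \<in> {..<n}" "a' \<in> {..<n}" "p a = p a'"
    then have "a < n" "a' < n" "p a < n" "A $$ (a, p a) \<noteq> 0" "A $$ (a', p a) \<noteq> 0"
      using p[of a] p[of a'] by auto
    then show "a = a'"
      using col by blast
  qed
  have sub: "p ` {..<n} \<subseteq> {..<n}"
    using p by blast
  have bij: "bij_betw p {..<n} {..<n}"
    unfolding bij_betw_def using inj endo_inj_surj[OF _ sub inj] by auto
  have S: "{(a, b). a < n \<and> b < n \<and> A $$ (a, b) \<noteq> 0} = (\<lambda>a. (a, p a)) ` {..<n}"
    using p p_unique by auto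
  have "(\<Prod>q\<in>{(a, b). a < n \<and> b < n \<and> A $$ (a, b) \<noteq> 0}. A $$ q) = (\<Prod>a<n. A $$ (a, p a))"
    unfolding S by (subst prod.reindex) (auto simp: inj_on_def)
  also have "\<dots> = (\<Prod>a<n. zeta_pow e (x a))"
    by (rule prod.cong) (auto simp: x)
  finally have "int e dvd (\<Sum>a<n. x a)"
    using prod prod_zeta_pow zeta_pow_eq_1_iff[OF assms(1)] by simp
  then show ?thesis
    using that bij A by (simp add: mono_data_def)
qed

lemma Geen_carrier: "A \<in> Geen e n \<Longrightarrow> A \<in> carrier_mat n n"
  by (simp add: Geen_def)

lemma bij_betw_lessThan_less: "bij_betw p {..<n} {..<n} \<Longrightarrow> a < n \<Longrightarrow> p a < n"
  unfolding bij_betw_def by auto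

lemma bij_betw_lessThan_neq:
  "bij_betw p {..<n} {..<n} \<Longrightarrow> a < n \<Longrightarrow> b < n \<Longrightarrow> a \<noteq> b \<Longrightarrow> p a \<noteq> p b"
  unfolding bij_betw_def by (meson inj_onD lessThan_iff)

lemma mono_data_less: "mono_data e n p x \<Longrightarrow> \<forall>a<n. p a < n"
  by (auto simp: mono_data_def bij_betw_lessThan_less)

lemma mono_data_id: "mono_data e n id (\<lambda>_. 0)"
  by (simp add: mono_data_def bij_betw_def)

lemma mono_data_mult:
  assumes "mono_data e n p x" "mono_data e n q y"
  shows "mono_data e n (q \<circ> p) (\<lambda>a. x a + y (p a))"
proof -
  have p: "bij_betw p {..<n} {..<n}" and q: "bij_betw q {..<n} {..<n}"
    using assms by (auto simp: mono_data_def)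
  have "(\<Sum>a<n. y (p a)) = (\<Sum>a<n. y a)"
    using sum.reindex_bij_betw[OF p, of y] by simp
  then show ?thesis
    using assms bij_betw_trans[OF p q] by (simp add: mono_data_def sum.distrib)
qed

lemma mono_data_inverse:
  assumes "mono_data e n p x"
  shows "mono_data e n (inv_into {..<n} p) (\<lambda>c. - x (inv_into {..<n} p c))"
proof -
  have p: "bij_betw p {..<n} {..<n}"
    using assms by (simp add: mono_data_def)
  have "(\<Sum>c<n. x (inv_into {..<n} p c)) = (\<Sum>a<n. x a)"
    using sum.reindex_bij_betw[OF bij_betw_inv_into[OF p], of x] by simp
  then show ?thesis
    using assms bij_betw_inv_into[OF p] by (simp add: mono_data_def sum_negf)
qed

lemma mono_mat_inverse:
  assumes "0 < e" "mono_data e n p x"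
  shows "mono_mat e n p x * mono_mat e n (inv_into {..<n} p) (\<lambda>c. - x (inv_into {..<n} p c)) = 1\<^sub>m n"
    and "mono_mat e n (inv_into {..<n} p) (\<lambda>c. - x (inv_into {..<n} p c)) * mono_mat e n p x = 1\<^sub>m n"
proof -
  let ?q = "inv_into {..<n} p"
  have p: "bij_betw p {..<n} {..<n}"
    using assms(2) by (simp add: mono_data_def)
  have q: "bij_betw ?q {..<n} {..<n}"
    using bij_betw_inv_into[OF p] .
  have qp: "?q (p a) = a" and pq: "p (?q a) = a" if "a < n" for a
    using p that by (auto simp: bij_betw_def inv_into_f_f f_inv_into_f)
  have "mono_mat e n p x * mono_mat e n ?q (\<lambda>c. - x (?q c)) = mono_mat e n (?q \<circ> p) (\<lambda>a. x a + - x (?q (p a)))"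
    by (rule mono_mat_mult) (use mono_data_less[OF assms(2)] in blast)
  also have "\<dots> = mono_mat e n id (\<lambda>_. 0)"
    using assms(1) qp bij_betw_lessThan_less[OF q] bij_betw_lessThan_less[OF p]
    by (subst mono_mat_eq_iff) auto
  finally show "mono_mat e n p x * mono_mat e n ?q (\<lambda>c. - x (?q c)) = 1\<^sub>m n"
    by (simp add: one_mat_eq_mono_mat[symmetric])
  have "mono_mat e n ?q (\<lambda>c. - x (?q c)) * mono_mat e n p x = mono_mat e n (p \<circ> ?q) (\<lambda>c. - x (?q c) + x (?q c))"
    by (rule mono_mat_mult) (use bij_betw_lessThan_less[OF q] in blast)
  also have "\<dots> = mono_mat e n id (\<lambda>_. 0)"
    using assms(1) pq bij_betw_lessThan_less[OF q] bij_betw_lessThan_less[OF p]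
    by (subst mono_mat_eq_iff) auto
  finally show "mono_mat e n ?q (\<lambda>c. - x (?q c)) * mono_mat e n p x = 1\<^sub>m n"
    by (simp add: one_mat_eq_mono_mat[symmetric])
qed

section \<open>The length function\<close>

definition index_pairs :: "nat \<Rightarrow> (nat \<times> nat) set" where
  "index_pairs n = {(a, b). a < b \<and> b < n}"

definition pair_weight :: "nat \<Rightarrow> nat \<Rightarrow> nat \<Rightarrow> int \<Rightarrow> nat" where
  "pair_weight e u v z = (if v < u then 1 else if int e dvd z then 0 else 2)"

definition mono_len :: "nat \<Rightarrow> nat \<Rightarrow> (nat \<Rightarrow> nat) \<Rightarrow> (nat \<Rightarrow> int) \<Rightarrow> nat" where
  "mono_len e n p x = (\<Sum>(a, b)\<in>index_pairs n. pair_weight e (p a) (p b) (x b))"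

lemma finite_index_pairs [simp]: "finite (index_pairs n)"
  by (rule finite_subset[of _ "{..<n} \<times> {..<n}"]) (auto simp: index_pairs_def)

lemma mono_len_id: "mono_len e n id (\<lambda>_. 0) = 0"
  unfolding mono_len_def by (rule sum.neutral) (auto simp: index_pairs_def pair_weight_def)

lemma mono_len_cong:
  assumes "\<forall>a<n. p a = q a \<and> x a mod int e = y a mod int e"
  shows "mono_len e n p x = mono_len e n q y"
  unfolding mono_len_def
  by (rule sum.cong) (use assms in \<open>auto simp: index_pairs_def pair_weight_def dvd_eq_mod_eq_0\<close>)

lemma mono_len_uminus: "mono_len e n p (\<lambda>a. - x a) = mono_len e n p x"
  unfolding mono_len_def by (rule sum.cong) (auto simp: pair_weight_def)

lemma mono_len_inv_into:
  assumes p: "bij_betw p {..<n} {..<n}"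
  shows "mono_len e n (inv_into {..<n} p) (\<lambda>c. z (inv_into {..<n} p c)) = mono_len e n p z"
proof -
  let ?q = "inv_into {..<n} p"
  define sort_pair :: "(nat \<Rightarrow> nat) \<Rightarrow> nat \<times> nat \<Rightarrow> nat \<times> nat"
    where "sort_pair f = (\<lambda>(a, b). (min (f a) (f b), max (f a) (f b)))" for f
  have q: "bij_betw ?q {..<n} {..<n}"
    using bij_betw_inv_into[OF p] .
  have qp: "?q (p a) = a" and pq: "p (?q a) = a" if "a < n" for a
    using p that by (auto simp: bij_betw_def inv_into_f_f f_inv_into_f)
  show ?thesis
    unfolding mono_len_def
  proof (rule sum.reindex_bij_witness[where i = "sort_pair p" and j = "sort_pair ?q"])
    fix cd assume "cd \<in> index_pairs n"
    then obtain c d where cd: "cd = (c, d)" "c < d" "d < n"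
      by (auto simp: index_pairs_def)
    have "?q c \<noteq> ?q d" "?q c < n" "?q d < n"
      using bij_betw_lessThan_neq[OF q, of c d] bij_betw_lessThan_less[OF q] cd by auto
    then show "sort_pair p (sort_pair ?q cd) = cd" and "sort_pair ?q cd \<in> index_pairs n"
      and "(\<lambda>(a, b). pair_weight e (p a) (p b) (z b)) (sort_pair ?q cd)
        = (\<lambda>(c, d). pair_weight e (?q c) (?q d) (z (?q d))) cd"
      using cd pq[of c] pq[of d]
      by (cases "?q c < ?q d"; auto simp: sort_pair_def min_def max_def index_pairs_def pair_weight_def)+
  next
    fix ab assume "ab \<in> index_pairs n"
    then obtain a b where ab: "ab = (a, b)" "a < b" "b < n"
      by (auto simp: index_pairs_def)
    have "p a \<noteq> p b" "p a < n" "p b < n"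
      using bij_betw_lessThan_neq[OF p, of a b] bij_betw_lessThan_less[OF p] ab by auto
    then show "sort_pair ?q (sort_pair p ab) = ab" and "sort_pair p ab \<in> index_pairs n"
      using ab qp[of a] qp[of b] by (cases "p a < p b"; auto simp: sort_pair_def min_def max_def index_pairs_def)+
  qed
qed

section \<open>The generators\<close>

text \<open>\<open>gen_mat e n 0 i\<close> is \<open>t\<^sub>i\<close>, and for \<open>r > 0\<close> the matrix \<open>gen_mat e n r i\<close> is
  \<open>s\<^sub>r\<^sub>+\<^sub>2\<close>, independently of \<open>i\<close>.\<close>

definition gen_exp :: "nat \<Rightarrow> int \<Rightarrow> nat \<Rightarrow> int" where
  "gen_exp r i a = (if r = 0 \<and> a = 0 then - i else if r = 0 \<and> a = 1 then i else 0)"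

definition gen_mat :: "nat \<Rightarrow> nat \<Rightarrow> nat \<Rightarrow> int \<Rightarrow> complex mat" where
  "gen_mat e n r i = mono_mat e n (transpose r (Suc r)) (gen_exp r i)"

lemma gen_exp_Suc [simp]: "gen_exp (Suc r) i = (\<lambda>_. 0)"
  by (simp add: fun_eq_iff gen_exp_def)

lemma gen_exp_0 [simp]: "gen_exp r 0 = (\<lambda>_. 0)"
  by (simp add: fun_eq_iff gen_exp_def)

lemma gen_exp_eq_0: "a \<noteq> r \<Longrightarrow> a \<noteq> Suc r \<Longrightarrow> gen_exp r i a = 0"
  by (simp add: gen_exp_def)

lemma gen_exp_swap: "gen_exp r i r = - gen_exp r i (Suc r)"
  by (simp add: gen_exp_def)

lemma tgen_eq_gen_mat: "2 \<le> n \<Longrightarrow> tgen e n i = gen_mat e n 0 i"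
  by (rule eq_matI) (auto simp: tgen_def gen_mat_def mono_mat_def gen_exp_def transpose_def)

lemma sgen_eq_gen_mat: "sgen n (r + 2) = gen_mat e n r 0"
proof (rule eq_matI)
  fix a b assume "a < dim_row (gen_mat e n r 0)" "b < dim_col (gen_mat e n r 0)"
  then have ab: "a < n" "b < n"
    by (simp_all add: gen_mat_def)
  have "sgen n (r + 2) $$ (a, b) = (if (a = r \<and> b = Suc r) \<or> (a = Suc r \<and> b = r) then 1
      else if a = b \<and> a \<noteq> r \<and> a \<noteq> Suc r then 1 else 0)"
    using ab by (simp add: sgen_def)
  also have "\<dots> = gen_mat e n r 0 $$ (a, b)"
    using ab by (cases "a = r"; cases "a = Suc r"; simp add: gen_mat_def mono_mat_index; fastforce)
  finally show "sgen n (r + 2) $$ (a, b) = gen_mat e n r 0 $$ (a, b)" .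
qed (simp_all add: sgen_def gen_mat_def)

lemma sgen_eq_gen_mat_diff:
  assumes "2 \<le> j"
  shows "sgen n j = gen_mat e n (j - 2) 0"
proof -
  have "j = (j - 2) + 2"
    using assms by simp
  then show ?thesis
    by (metis sgen_eq_gen_mat)
qed

lemma gen_mat_Suc_eq: "gen_mat e n (Suc r) i = gen_mat e n (Suc r) 0"
  by (simp add: gen_mat_def)

lemma gen_mat_0_in_Xgen: "2 \<le> n \<Longrightarrow> m < e \<Longrightarrow> gen_mat e n 0 (int m) \<in> Xgen e n"
  by (auto simp: Xgen_def tgen_eq_gen_mat)

lemma gen_mat_Suc_in_Xgen:
  assumes "Suc (Suc r) < n"
  shows "gen_mat e n (Suc r) i \<in> Xgen e n"
proof -
  have "gen_mat e n (Suc r) i = sgen n (Suc r + 2)"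
    using gen_mat_Suc_eq sgen_eq_gen_mat by metis
  then show ?thesis
    using assms by (auto simp: Xgen_def)
qed

lemma Xgen_elim:
  assumes "g \<in> Xgen e n" "2 \<le> n"
  obtains r i where "Suc r < n" "g = gen_mat e n r i"
proof -
  from assms(1) consider (t) m where "g = tgen e n (int m)"
    | (s) j where "3 \<le> j" "j \<le> n" "g = sgen n j"
    unfolding Xgen_def by blast
  then show thesis
  proof cases
    case t
    then show ?thesis
      using that[of 0 "int m"] assms(2) by (simp add: tgen_eq_gen_mat)
  next
    case s
    then have "g = gen_mat e n (j - 2) 0"
      using sgen_eq_gen_mat_diff[of j n e] by simp
    then show ?thesis
      using that[of "j - 2" 0] s by simp
  qed
qed

definition act_perm :: "nat \<Rightarrow> (nat \<Rightarrow> nat) \<Rightarrow> nat \<Rightarrow> nat" where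
  "act_perm r p = p \<circ> transpose r (Suc r)"

definition act_exp :: "nat \<Rightarrow> int \<Rightarrow> (nat \<Rightarrow> int) \<Rightarrow> nat \<Rightarrow> int" where
  "act_exp r i x = (\<lambda>a. gen_exp r i a + x (transpose r (Suc r) a))"

lemma act_perm_apply [simp]:
  "act_perm r p r = p (Suc r)" "act_perm r p (Suc r) = p r"
  "a \<noteq> r \<Longrightarrow> a \<noteq> Suc r \<Longrightarrow> act_perm r p a = p a"
  by (auto simp: act_perm_def)

lemma act_exp_apply [simp]:
  "act_exp r i x r = gen_exp r i r + x (Suc r)" "act_exp r i x (Suc r) = gen_exp r i (Suc r) + x r"
  "a \<noteq> r \<Longrightarrow> a \<noteq> Suc r \<Longrightarrow> act_exp r i x a = gen_exp r i a + x a"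
  by (auto simp: act_exp_def)

lemma gen_mat_mult:
  "Suc r < n \<Longrightarrow> gen_mat e n r i * mono_mat e n p x = mono_mat e n (act_perm r p) (act_exp r i x)"
  unfolding gen_mat_def act_perm_def act_exp_def
  by (subst mono_mat_mult) (auto simp: transpose_def)

lemma gen_mat_eq_act: "gen_mat e n r i = mono_mat e n (act_perm r id) (act_exp r i (\<lambda>_. 0))"
  by (simp add: gen_mat_def act_perm_def act_exp_def)

lemma gen_mat_square:
  assumes "Suc r < n"
  shows "gen_mat e n r i * gen_mat e n r i = 1\<^sub>m n"
proof -
  have "act_perm r (transpose r (Suc r)) = id" "act_exp r i (gen_exp r i) = (\<lambda>_. 0)"
    by (auto simp: fun_eq_iff act_perm_def act_exp_def gen_exp_def transpose_def)
  then show ?thesis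
    using gen_mat_mult[OF assms, of e i "transpose r (Suc r)" "gen_exp r i"]
    by (simp add: gen_mat_def one_mat_eq_mono_mat[of n e])
qed

lemma mono_data_act:
  assumes "Suc r < n" "mono_data e n p x"
  shows "mono_data e n (act_perm r p) (act_exp r i x)"
proof -
  have t: "bij_betw (transpose r (Suc r)) {..<n} {..<n}"
    using assms(1) by (simp add: bij_betw_transpose_iff)
  have p: "bij_betw p {..<n} {..<n}"
    using assms(2) by (simp add: mono_data_def)
  have "(\<Sum>a<n. gen_exp r i a) = 0"
  proof (cases "r = 0")
    case True
    then have "(\<Sum>a<n. gen_exp r i a) = (\<Sum>a\<in>{0, 1}. gen_exp r i a)"
      by (intro sum.mono_neutral_right) (use assms(1) in \<open>auto simp: gen_exp_def\<close>)
    then show ?thesis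
      using True by (simp add: gen_exp_def)
  qed (simp add: gen_exp_def)
  moreover have "(\<Sum>a<n. x (transpose r (Suc r) a)) = (\<Sum>a<n. x a)"
    using sum.reindex_bij_betw[OF t, of x] by simp
  ultimately show ?thesis
    using assms(2) bij_betw_trans[OF t p]
    by (simp add: mono_data_def act_perm_def act_exp_def sum.distrib)
qed

lemma mono_data_gen: "Suc r < n \<Longrightarrow> mono_data e n (transpose r (Suc r)) (gen_exp r i)"
  using mono_data_act[OF _ mono_data_id, of r n e i] by (simp add: act_perm_def act_exp_def)

text \<open>Multiplying by a generator only changes the weight of the pair \<open>(r, r + 1)\<close>;
  the transposition permutes the remaining pairs among themselves.\<close>

lemma mono_len_act:
  assumes r: "Suc r < n"
  shows "mono_len e n (act_perm r p) (act_exp r i x) + pair_weight e (p r) (p (Suc r)) (x (Suc r))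
       = mono_len e n p x + pair_weight e (p (Suc r)) (p r) (gen_exp r i (Suc r) + x r)"
proof -
  let ?t = "transpose r (Suc r)" and ?P = "index_pairs n - {(r, Suc r)}"
  define w where "w = (\<lambda>(a, b). pair_weight e (p a) (p b) (x b))"
  define w' where "w' = (\<lambda>(a, b). pair_weight e (act_perm r p a) (act_perm r p b) (act_exp r i x b))"
  have mem: "(r, Suc r) \<in> index_pairs n"
    using r by (simp add: index_pairs_def)
  have swap_pairs: "(?t a, ?t b) \<in> ?P" if "(a, b) \<in> ?P" for a b
    using that r by (auto simp: index_pairs_def transpose_def)
  have "sum w' ?P = sum w ?P"
  proof (rule sum.reindex_bij_witness[where i = "\<lambda>(a, b). (?t a, ?t b)" and j = "\<lambda>(a, b). (?t a, ?t b)"])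
    fix q assume q: "q \<in> ?P"
    then obtain a b where ab: "q = (a, b)" "a < b" "b < n" "(a, b) \<noteq> (r, Suc r)"
      by (auto simp: index_pairs_def)
    have "gen_exp r i b = 0"
      using ab by (auto simp: gen_exp_def)
    then show "w ((\<lambda>(a, b). (?t a, ?t b)) q) = w' q"
      using ab by (simp add: w_def w'_def act_perm_def act_exp_def)
  qed (use swap_pairs in auto)
  moreover have "mono_len e n p x = w (r, Suc r) + sum w ?P"
    unfolding mono_len_def w_def[symmetric] using sum.remove[OF finite_index_pairs mem] by simp
  moreover have "mono_len e n (act_perm r p) (act_exp r i x) = w' (r, Suc r) + sum w' ?P"
    unfolding mono_len_def w'_def[symmetric] using sum.remove[OF finite_index_pairs mem] by simp
  ultimately show ?thesis
    by (simp add: w_def w'_def)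
qed

lemma mono_len_gen: "Suc r < n \<Longrightarrow> mono_len e n (transpose r (Suc r)) (gen_exp r i) = 1"
  using mono_len_act[of r n e id i "\<lambda>_. 0"]
  by (simp add: mono_len_id pair_weight_def act_perm_def act_exp_def)

lemma mono_len_act_ascent:
  assumes "Suc r < n" "p r < p (Suc r)" "int e dvd x (Suc r)"
  shows "mono_len e n (act_perm r p) (act_exp r i x) = mono_len e n p x + 1"
  using mono_len_act[OF assms(1), of e p i x] assms(2,3) by (simp add: pair_weight_def)

definition left_descent :: "nat \<Rightarrow> nat \<Rightarrow> int \<Rightarrow> (nat \<Rightarrow> nat) \<Rightarrow> (nat \<Rightarrow> int) \<Rightarrow> bool" where
  "left_descent e r i p x \<longleftrightarrow>
     pair_weight e (p (Suc r)) (p r) (gen_exp r i (Suc r) + x r) + 1 = pair_weight e (p r) (p (Suc r)) (x (Suc r))"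

lemma mono_len_act_descent:
  "Suc r < n \<Longrightarrow> mono_len e n (act_perm r p) (act_exp r i x) + 1 = mono_len e n p x \<longleftrightarrow> left_descent e r i p x"
  using mono_len_act[of r n e p i x] unfolding left_descent_def by linarith

lemma mono_len_act_le:
  assumes "Suc r < n" "p r \<noteq> p (Suc r)"
  shows "mono_len e n (act_perm r p) (act_exp r i x) \<le> mono_len e n p x + 1"
proof -
  have "pair_weight e (p (Suc r)) (p r) (gen_exp r i (Suc r) + x r) \<le> pair_weight e (p r) (p (Suc r)) (x (Suc r)) + 1"
    using assms(2) by (auto simp: pair_weight_def)
  then show ?thesis
    using mono_len_act[OF assms(1), of e p i x] by linarith
qed

lemma left_descent_inverted_01:
  assumes "p 1 < p 0"
  shows "left_descent e 0 ((- x 0) mod int e) p x"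
proof -
  have "int e dvd ((- x 0) mod int e + x 0)"
    by (metis add.commute dvd_eq_mod_eq_0 mod_add_right_eq neg_eq_iff_add_eq_0 mod_0)
  then show ?thesis
    using assms by (simp add: left_descent_def pair_weight_def gen_exp_def)
qed

lemma left_descent_root_1: "p 0 < p 1 \<Longrightarrow> \<not> int e dvd x 1 \<Longrightarrow> left_descent e 0 0 p x"
  by (simp add: left_descent_def pair_weight_def)

lemma left_descent_Suc:
  "(p (Suc (Suc r)) < p (Suc r) \<and> int e dvd x (Suc r)) \<or> (p (Suc r) < p (Suc (Suc r)) \<and> \<not> int e dvd x (Suc (Suc r)))
    \<Longrightarrow> left_descent e (Suc r) 0 p x"
  by (auto simp: left_descent_def pair_weight_def)

section \<open>Word length\<close>

lemma word_prod_Cons: "word_prod n (g # ws) = g * word_prod n ws"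
  by (simp add: word_prod_def)

lemma bij_betw_lessThan_increasing_eq:
  fixes p :: "nat \<Rightarrow> nat"
  assumes "bij_betw p {..<n} {..<n}" "\<And>a b. a < b \<Longrightarrow> b < n \<Longrightarrow> p a < p b" "a < n"
  shows "p a = a"
proof -
  have ge: "c \<le> p c" if "c < n" for c
    using that
  proof (induction c)
    case (Suc c)
    then show ?case
      using assms(2)[of c "Suc c"] by simp
  qed simp
  have le: "p (n - 1 - d) \<le> n - 1 - d" if "d < n" for d
    using that
  proof (induction d)
    case 0
    then show ?case
      using bij_betw_lessThan_less[OF assms(1), of "n - 1"] by simp
  next
    case (Suc d)
    have "p (n - 1 - Suc d) < p (n - 1 - d)"
      using assms(2)[of "n - 1 - Suc d" "n - 1 - d"] Suc.prems by simp
    then show ?case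
      using Suc by simp
  qed
  show ?thesis
    using le[of "n - 1 - a"] ge[OF assms(3)] assms(3) by (simp add: Suc_diff_le)
qed

lemma mono_len_eq_0_if_ascending:
  assumes "\<forall>r. Suc r < n \<longrightarrow> p r < p (Suc r) \<and> int e dvd x (Suc r)"
  shows "mono_len e n p x = 0"
proof -
  have incr: "p a < p b" if "a < b" "b < n" for a b
    using that by (induction b) (use assms less_Suc_eq in \<open>fastforce+\<close>)
  have dvd: "int e dvd x b" if "0 < b" "b < n" for b
    using that assms by (cases b) auto
  have "pair_weight e (p a) (p b) (x b) = 0" if "a < b" "b < n" for a b
    using incr[OF that] dvd[of b] that by (simp add: pair_weight_def)
  then show ?thesis
    unfolding mono_len_def by (intro sum.neutral) (auto simp: index_pairs_def)
qed

lemma mono_mat_eq_1_if_mono_len_eq_0: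
  assumes "0 < e" "mono_data e n p x" "mono_len e n p x = 0"
  shows "mono_mat e n p x = 1\<^sub>m n"
proof -
  have bij: "bij_betw p {..<n} {..<n}" and e_dvd_sum: "int e dvd (\<Sum>a<n. x a)"
    using assms(2) by (auto simp: mono_data_def)
  have "pair_weight e (p a) (p b) (x b) = 0" if "(a, b) \<in> index_pairs n" for a b
    using assms(3) that unfolding mono_len_def by (subst (asm) sum_eq_0_iff) auto
  then have incr: "p a < p b \<and> int e dvd x b" if "a < b" "b < n" for a b
    using that bij_betw_lessThan_neq[OF bij, of a b]
    by (fastforce simp: index_pairs_def pair_weight_def split: if_splits)
  have "a < n \<Longrightarrow> p a = a" for a
    using bij_betw_lessThan_increasing_eq[OF bij] incr by blast
  moreover have "int e dvd x a" if "a < n" for a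
  proof (cases a)
    case 0
    have "(\<Sum>a<n. x a) = x 0 + (\<Sum>a\<in>{1..<n}. x a)"
      using that 0 by (simp add: atLeast1_lessThan_eq_remove0 sum.remove)
    moreover have "int e dvd (\<Sum>a\<in>{1..<n}. x a)"
        by (intro dvd_sum) (use incr[of 0] in auto)
    ultimately show ?thesis
      using e_dvd_sum 0 by (metis dvd_add_left_iff)
  qed (use incr[of 0 a] that in auto)
  ultimately have "mono_mat e n p x = mono_mat e n id (\<lambda>_. 0)"
    using assms(1) bij_betw_lessThan_less[OF bij] by (subst mono_mat_eq_iff) (auto simp: dvd_eq_mod_eq_0)
  then show ?thesis
    by (simp add: one_mat_eq_mono_mat[symmetric])
qed

locale geen_group =
  fixes e n :: nat
  assumes e_pos: "0 < e" and n_ge_2: "2 \<le> n"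
begin

lemma gen_mat_in_Geen: "Suc r < n \<Longrightarrow> gen_mat e n r i \<in> Geen e n"
  unfolding gen_mat_def by (rule mono_mat_in_Geen[OF e_pos mono_data_gen])

lemma word_prod_eq_mono_mat:
  assumes "set ws \<subseteq> Xgen e n"
  shows "\<exists>p x. mono_data e n p x \<and> word_prod n ws = mono_mat e n p x \<and> mono_len e n p x \<le> length ws"
  using assms
proof (induction ws)
  case Nil
  have "mono_data e n id (\<lambda>_. 0) \<and> word_prod n [] = mono_mat e n id (\<lambda>_. 0) \<and> mono_len e n id (\<lambda>_. 0) \<le> length []"
    by (simp add: word_prod_def one_mat_eq_mono_mat[of n e] mono_data_id mono_len_id)
  then show ?case
    by blast
next
  case (Cons g ws)
  then obtain p x where px: "mono_data e n p x" "word_prod n ws = mono_mat e n p x" "mono_len e n p x \<le> length ws"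
    by auto
  have "g \<in> Xgen e n"
    using Cons.prems by simp
  then obtain r i where r: "Suc r < n" and g: "g = gen_mat e n r i"
    using Xgen_elim n_ge_2 by blast
  have "p r \<noteq> p (Suc r)"
    using px(1) r bij_betw_lessThan_neq[of p n r "Suc r"] by (simp add: mono_data_def)
  then have "mono_len e n (act_perm r p) (act_exp r i x) \<le> length (g # ws)"
    using mono_len_act_le[OF r, of p e i x] px(3) by simp
  moreover have "word_prod n (g # ws) = mono_mat e n (act_perm r p) (act_exp r i x)"
    using gen_mat_mult[OF r] px(2) g by (simp add: word_prod_Cons)
  ultimately show ?case
    using mono_data_act[OF r px(1)] by blast
qed

text \<open>If no generator shortens an element, its data is that of an ascending diagonal matrix,
  which has length zero.\<close>

lemma exists_left_descent:
  assumes p: "bij_betw p {..<n} {..<n}" and pos: "0 < mono_len e n p x"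
  shows "\<exists>r i. Suc r < n \<and> gen_mat e n r i \<in> Xgen e n \<and> left_descent e r i p x"
proof (rule ccontr)
  assume none: "\<nexists>r i. Suc r < n \<and> gen_mat e n r i \<in> Xgen e n \<and> left_descent e r i p x"
  have n1: "Suc 0 < n"
    using n_ge_2 by simp
  have neq: "p a \<noteq> p b" if "a < n" "b < n" "a \<noteq> b" for a b
    using bij_betw_lessThan_neq[OF p] that .
  have "p r < p (Suc r) \<and> int e dvd x (Suc r)" if "Suc r < n" for r
    using that
  proof (induction r)
    case 0
    have m: "nat ((- x 0) mod int e) < e" "int (nat ((- x 0) mod int e)) = (- x 0) mod int e"
      using e_pos by (auto simp: nat_less_iff)
    have "\<not> p 1 < p 0"
      using none gen_mat_0_in_Xgen[OF n_ge_2 m(1)] left_descent_inverted_01 m(2) n1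
      by fastforce
    then have "p 0 < p 1"
      using neq[of 0 1] n1 by auto
    moreover have "int e dvd x 1"
      using none gen_mat_0_in_Xgen[OF n_ge_2 e_pos] left_descent_root_1 \<open>p 0 < p 1\<close> n1
      by fastforce
    ultimately show ?case
      by simp
  next
    case (Suc r)
    then have "p r < p (Suc r) \<and> int e dvd x (Suc r)"
      by simp
    then show ?case
      using none gen_mat_Suc_in_Xgen[OF Suc.prems] left_descent_Suc[where p = p and r = r and x = x]
        neq[of "Suc r" "Suc (Suc r)"] Suc.prems
      by (metis Suc_lessD lessI linorder_neqE_nat n_not_Suc_n)
  qed
  then have "mono_len e n p x = 0"
    using mono_len_eq_0_if_ascending by blast
  then show False
    using pos by simp
qed

lemma word_of_mono_data:
  assumes "mono_data e n p x"
  shows "\<exists>ws. set ws \<subseteq> Xgen e n \<and> length ws = mono_len e n p x \<and> word_prod n ws = mono_mat e n p x"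
  using assms
proof (induction "mono_len e n p x" arbitrary: p x rule: less_induct)
  case less
  show ?case
  proof (cases "mono_len e n p x = 0")
    case True
    then show ?thesis
      using mono_mat_eq_1_if_mono_len_eq_0[OF e_pos less.prems] by (auto simp: word_prod_def)
  next
    case False
    have "bij_betw p {..<n} {..<n}"
      using less.prems by (simp add: mono_data_def)
    then obtain r i where r: "Suc r < n" and g: "gen_mat e n r i \<in> Xgen e n" and d: "left_descent e r i p x"
      using exists_left_descent False by blast
    let ?p = "act_perm r p" and ?x = "act_exp r i x" and ?g = "gen_mat e n r i"
    obtain ws where ws: "set ws \<subseteq> Xgen e n" "length ws = mono_len e n ?p ?x" "word_prod n ws = mono_mat e n ?p ?x"
      using less.hyps[of ?p ?x] mono_len_act_descent[OF r, of e p i x] d mono_data_act[OF r less.prems]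
      by auto
    have "word_prod n (?g # ws) = ?g * (?g * mono_mat e n p x)"
      using ws(3) gen_mat_mult[OF r] by (simp add: word_prod_Cons)
    also have "\<dots> = mono_mat e n p x"
      using gen_mat_square[OF r]
      by (simp add: assoc_mult_mat[symmetric, of _ n n _ n _ n] gen_mat_def)
    finally show ?thesis
      using ws g mono_len_act_descent[OF r, of e p i x] d by (intro exI[of _ "?g # ws"]) auto
  qed
qed

theorem wlen_mono_mat:
  assumes "mono_data e n p x"
  shows "wlen e n (mono_mat e n p x) = mono_len e n p x"
  unfolding wlen_def
proof (rule Least_equality)
  show "\<exists>ws. set ws \<subseteq> Xgen e n \<and> length ws = mono_len e n p x \<and> word_prod n ws = mono_mat e n p x"
    using word_of_mono_data[OF assms] .
next
  fix m assume "\<exists>ws. set ws \<subseteq> Xgen e n \<and> length ws = m \<and> word_prod n ws = mono_mat e n p x"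
  then obtain ws where ws: "set ws \<subseteq> Xgen e n" "length ws = m" "word_prod n ws = mono_mat e n p x"
    by blast
  obtain q y where qy: "mono_data e n q y" "word_prod n ws = mono_mat e n q y" "mono_len e n q y \<le> length ws"
    using word_prod_eq_mono_mat[OF ws(1)] by blast
  have "mono_mat e n p x = mono_mat e n q y"
    using ws(3) qy(2) by simp
  then have "\<forall>a<n. p a = q a \<and> x a mod int e = y a mod int e"
    by (simp only: mono_mat_eq_iff[OF e_pos mono_data_less[OF assms] mono_data_less[OF qy(1)]])
  then show "mono_len e n p x \<le> m"
    using mono_len_cong qy(3) ws(2) by metis
qed

end

section \<open>Inverses and the two orders\<close>

lemma ginv_eqI:
  assumes "u \<in> Geen e n" "v \<in> Geen e n" "u * v = 1\<^sub>m n" "w \<in> Geen e n" "w * u = 1\<^sub>m n"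
  shows "ginv e n u = v"
  unfolding ginv_def
proof (rule the_equality)
  show "v \<in> Geen e n \<and> u * v = 1\<^sub>m n"
    using assms by simp
  have "v' = w" if "v' \<in> Geen e n" "u * v' = 1\<^sub>m n" for v'
  proof -
    have c: "u \<in> carrier_mat n n" "v' \<in> carrier_mat n n" "w \<in> carrier_mat n n"
      using assms that Geen_carrier by auto
    have "v' = (w * u) * v'"
      using assms(5) c by simp
    also have "\<dots> = w * (u * v')"
      using c by (simp add: assoc_mult_mat[of _ n n _ n _ n])
    finally show ?thesis
      using that c by simp
  qed
  then show "v' = v" if "v' \<in> Geen e n \<and> u * v' = 1\<^sub>m n" for v'
    using that assms by blast
qed

context geen_group
begin

lemma ginv_mono_mat:
  assumes "mono_data e n p x"
  shows "ginv e n (mono_mat e n p x) = mono_mat e n (inv_into {..<n} p) (\<lambda>c. - x (inv_into {..<n} p c))"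
  by (rule ginv_eqI[where w = "mono_mat e n (inv_into {..<n} p) (\<lambda>c. - x (inv_into {..<n} p c))"])
    (use assms mono_mat_in_Geen[OF e_pos] mono_data_inverse mono_mat_inverse[OF e_pos] in auto)

lemma Geen_mult: "A \<in> Geen e n \<Longrightarrow> B \<in> Geen e n \<Longrightarrow> A * B \<in> Geen e n"
  by (auto elim!: Geen_elim[OF e_pos] simp: mono_mat_mult mono_data_less
      intro!: mono_mat_in_Geen[OF e_pos] mono_data_mult)

lemma ginv_Geen:
  assumes "A \<in> Geen e n"
  shows "ginv e n A \<in> Geen e n" "A * ginv e n A = 1\<^sub>m n" "ginv e n A * A = 1\<^sub>m n"
    and "wlen e n (ginv e n A) = wlen e n A"
proof -
  obtain p x where px: "mono_data e n p x" "A = mono_mat e n p x"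
    using Geen_elim[OF e_pos assms] .
  then show "ginv e n A \<in> Geen e n" "A * ginv e n A = 1\<^sub>m n" "ginv e n A * A = 1\<^sub>m n"
    using ginv_mono_mat mono_mat_in_Geen[OF e_pos mono_data_inverse] mono_mat_inverse[OF e_pos] by simp_all
  have "bij_betw p {..<n} {..<n}"
    using px(1) by (simp add: mono_data_def)
  then show "wlen e n (ginv e n A) = wlen e n A"
    using px ginv_mono_mat wlen_mono_mat mono_data_inverse mono_len_inv_into[of p n e "\<lambda>a. - x a"]
    by (simp add: mono_len_uminus)
qed

lemma ginv_ginv: "A \<in> Geen e n \<Longrightarrow> ginv e n (ginv e n A) = A"
  using ginv_eqI ginv_Geen by metis

lemma ginv_mult:
  assumes "A \<in> Geen e n" "B \<in> Geen e n"
  shows "ginv e n (A * B) = ginv e n B * ginv e n A"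
proof (rule ginv_eqI)
  have c: "A \<in> carrier_mat n n" "B \<in> carrier_mat n n" "ginv e n A \<in> carrier_mat n n" "ginv e n B \<in> carrier_mat n n"
    using assms ginv_Geen Geen_carrier by blast+
  have "A * B * (ginv e n B * ginv e n A) = A * (B * ginv e n B) * ginv e n A"
    using c by (simp add: assoc_mult_mat[of _ n n _ n _ n])
  then show "A * B * (ginv e n B * ginv e n A) = 1\<^sub>m n"
    using ginv_Geen assms c by simp
  have "ginv e n B * ginv e n A * (A * B) = ginv e n B * (ginv e n A * A) * B"
    using c by (simp add: assoc_mult_mat[of _ n n _ n _ n])
  then show "ginv e n B * ginv e n A * (A * B) = 1\<^sub>m n"
    using ginv_Geen assms c by simp
qed (use Geen_mult assms ginv_Geen in blast)+

lemma suffix_le_iff_prefix_le_ginv: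
  assumes "u \<in> Geen e n" "w \<in> Geen e n"
  shows "suffix_le e n u w \<longleftrightarrow> prefix_le e n (ginv e n u) (ginv e n w)"
proof -
  have "ginv e n (w * ginv e n u) = u * ginv e n w"
    using ginv_mult[OF assms(2) ginv_Geen(1)[OF assms(1)]] ginv_ginv[OF assms(1)] by simp
  then have "wlen e n (w * ginv e n u) = wlen e n (u * ginv e n w)"
    using ginv_Geen(4)[OF Geen_mult[OF assms(2) ginv_Geen(1)[OF assms(1)]]] by simp
  then show ?thesis
    unfolding suffix_le_def prefix_le_def
    using assms ginv_Geen[OF assms(1)] ginv_Geen[OF assms(2)] ginv_ginv[OF assms(1)] by auto
qed

lemma prefix_le_mult:
  assumes "u \<in> Geen e n" "h \<in> Geen e n" "wlen e n (u * h) = wlen e n u + wlen e n h"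
  shows "prefix_le e n u (u * h)"
proof -
  have "ginv e n u * (u * h) = h"
    using ginv_Geen[OF assms(1)] Geen_carrier[OF assms(1)] Geen_carrier[OF assms(2)] Geen_carrier[OF ginv_Geen(1)[OF assms(1)]]
    by (simp add: assoc_mult_mat[symmetric, of _ n n _ n _ n])
  then show ?thesis
    unfolding prefix_le_def using assms Geen_mult by simp
qed

lemma suffix_le_mult:
  assumes "u \<in> Geen e n" "h \<in> Geen e n" "wlen e n (h * u) = wlen e n h + wlen e n u"
  shows "suffix_le e n u (h * u)"
proof -
  have "(h * u) * ginv e n u = h"
    using ginv_Geen[OF assms(1)] Geen_carrier[OF assms(1)] Geen_carrier[OF assms(2)] Geen_carrier[OF ginv_Geen(1)[OF assms(1)]]
    by (simp add: assoc_mult_mat[of _ n n _ n _ n])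
  then show ?thesis
    unfolding suffix_le_def using assms Geen_mult by simp
qed

lemma ginv_gen_mat: "Suc r < n \<Longrightarrow> ginv e n (gen_mat e n r i) = gen_mat e n r i"
  using ginv_eqI gen_mat_in_Geen gen_mat_square by metis

lemma wlen_gen_mat: "Suc r < n \<Longrightarrow> wlen e n (gen_mat e n r i) = 1"
  unfolding gen_mat_def using wlen_mono_mat[OF mono_data_gen] mono_len_gen by simp

lemma prefix_le_gen_mat_iff:
  assumes "Suc r < n" "mono_data e n p x"
  shows "prefix_le e n (gen_mat e n r i) (mono_mat e n p x) \<longleftrightarrow> left_descent e r i p x"
  unfolding prefix_le_def
  using assms gen_mat_in_Geen mono_mat_in_Geen[OF e_pos] wlen_gen_mat ginv_gen_mat gen_mat_mult
    wlen_mono_mat mono_data_act mono_len_act_descent[OF assms(1), of e p i x]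
  by auto

end

section \<open>The interval below \<open>\<lambda>\<^sup>k\<close>\<close>

definition lam_exp :: "nat \<Rightarrow> nat \<Rightarrow> nat \<Rightarrow> int" where
  "lam_exp n k a = int k * (if a = 0 then - (int n - 1) else 1)"

lemma lam_pow_eq_mono_mat: "lam e n ^\<^sub>m k = mono_mat e n id (lam_exp n k)"
proof (induction k)
  case 0
  have "lam_exp n 0 = (\<lambda>_. 0)"
    by (simp add: fun_eq_iff lam_exp_def)
  then show ?case
    by (simp add: lam_def one_mat_eq_mono_mat[of n e] id_def)
next
  case (Suc k)
  have lam: "lam e n = mono_mat e n id (lam_exp n 1)"
    by (rule eq_matI) (auto simp: lam_def mono_mat_def lam_exp_def)
  have "lam e n ^\<^sub>m Suc k = lam e n ^\<^sub>m k * lam e n"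
    by simp
  also have "\<dots> = mono_mat e n id (lam_exp n k) * mono_mat e n id (lam_exp n 1)"
    unfolding Suc.IH by (subst lam) (rule refl)
  also have "\<dots> = mono_mat e n id (\<lambda>a. lam_exp n k a + lam_exp n 1 a)"
    by (subst mono_mat_mult) auto
  also have "(\<lambda>a. lam_exp n k a + lam_exp n 1 a) = lam_exp n (Suc k)"
    by (auto simp: fun_eq_iff lam_exp_def algebra_simps)
  finally show ?case .
qed

lemma mono_data_lam_exp:
  assumes "1 \<le> n"
  shows "mono_data e n id (lam_exp n k)"
proof -
  have "(\<Sum>a<n. lam_exp n k a) = lam_exp n k 0 + (\<Sum>a\<in>{1..<n}. lam_exp n k a)"
    using assms by (simp add: atLeast1_lessThan_eq_remove0 sum.remove)
  also have "(\<Sum>a\<in>{1..<n}. lam_exp n k a) = (\<Sum>a\<in>{1..<n}. int k)"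
    by (rule sum.cong) (auto simp: lam_exp_def)
  finally have "(\<Sum>a<n. lam_exp n k a) = 0"
    using assms by (simp add: lam_exp_def algebra_simps of_nat_diff)
  then show ?thesis
    by (simp add: mono_data_def)
qed

definition interval_cond :: "nat \<Rightarrow> nat \<Rightarrow> int \<Rightarrow> (nat \<Rightarrow> nat) \<Rightarrow> (nat \<Rightarrow> int) \<Rightarrow> bool" where
  "interval_cond e n \<kappa> p x \<longleftrightarrow>
     (\<forall>a b. a < b \<longrightarrow> b < n \<longrightarrow> p a < p b \<longrightarrow> int e dvd x b \<or> int e dvd (\<kappa> - x b))"

lemma interval_cond_inverse:
  assumes "bij_betw p {..<n} {..<n}" "interval_cond e n \<kappa> p x"
  shows "interval_cond e n (- \<kappa>) (inv_into {..<n} p) (\<lambda>c. - x (inv_into {..<n} p c))"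
  unfolding interval_cond_def
proof (intro allI impI)
  let ?q = "inv_into {..<n} p"
  fix c d assume cd: "c < d" "d < n" "?q c < ?q d"
  have "p (?q c) = c" "p (?q d) = d" "?q d < n"
    using assms(1) cd bij_betw_lessThan_less[OF bij_betw_inv_into[OF assms(1)]]
    by (auto simp: bij_betw_def f_inv_into_f)
  then have "int e dvd x (?q d) \<or> int e dvd (\<kappa> - x (?q d))"
    using assms(2) cd unfolding interval_cond_def by metis
  then show "int e dvd - x (?q d) \<or> int e dvd (- \<kappa> - - x (?q d))"
    by (metis dvd_minus_iff minus_diff_eq diff_minus_eq_add uminus_add_conv_diff)
qed

lemma pair_weight_complement:
  assumes "\<not> int e dvd \<kappa>" "u \<noteq> v"
  shows "2 \<le> pair_weight e u v z + pair_weight e u v (\<kappa> - z)"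
    and "pair_weight e u v z + pair_weight e u v (\<kappa> - z) = 2 \<longleftrightarrow> (u < v \<longrightarrow> int e dvd z \<or> int e dvd (\<kappa> - z))"
proof -
  have "\<not> (int e dvd z \<and> int e dvd (\<kappa> - z))"
    using assms(1) by (metis diff_add_cancel dvd_add)
  then show "2 \<le> pair_weight e u v z + pair_weight e u v (\<kappa> - z)"
    and "pair_weight e u v z + pair_weight e u v (\<kappa> - z) = 2 \<longleftrightarrow> (u < v \<longrightarrow> int e dvd z \<or> int e dvd (\<kappa> - z))"
    using assms(2) by (auto simp: pair_weight_def)
qed

context geen_group
begin

lemma wlen_lam_pow:
  assumes "\<not> int e dvd int k"
  shows "wlen e n (lam e n ^\<^sub>m k) = (\<Sum>q\<in>index_pairs n. 2)"
proof -
  have "mono_data e n id (lam_exp n k)"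
    using mono_data_lam_exp n_ge_2 by simp
  moreover have "mono_len e n id (lam_exp n k) = (\<Sum>q\<in>index_pairs n. 2)"
    unfolding mono_len_def
    using assms by (intro sum.cong) (auto simp: index_pairs_def pair_weight_def lam_exp_def)
  ultimately show ?thesis
    using wlen_mono_mat lam_pow_eq_mono_mat by simp
qed

lemma wlen_ginv_mult_lam_pow:
  assumes px: "mono_data e n p x"
  shows "wlen e n (ginv e n (mono_mat e n p x) * lam e n ^\<^sub>m k) = mono_len e n p (\<lambda>a. lam_exp n k a - x a)"
proof -
  let ?q = "inv_into {..<n} p"
  have p: "bij_betw p {..<n} {..<n}"
    using px by (simp add: mono_data_def)
  have "ginv e n (mono_mat e n p x) * lam e n ^\<^sub>m k = mono_mat e n ?q (\<lambda>c. lam_exp n k (?q c) - x (?q c))"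
    unfolding ginv_mono_mat[OF px] lam_pow_eq_mono_mat
    using bij_betw_lessThan_less[OF bij_betw_inv_into[OF p]] by (subst mono_mat_mult) auto
  moreover have "mono_data e n ?q (\<lambda>c. lam_exp n k (?q c) - x (?q c))"
    using mono_data_mult[OF mono_data_inverse[OF px], of id "lam_exp n k"] mono_data_lam_exp n_ge_2
    by (simp add: comp_def)
  ultimately show ?thesis
    using wlen_mono_mat mono_len_inv_into[OF p, of e "\<lambda>a. lam_exp n k a - x a"] by simp
qed

text \<open>Every pair contributes \<open>2\<close> to the length of \<open>\<lambda>\<^sup>k\<close>, while \<open>w\<close> and \<open>w\<^sup>-\<^sup>1 \<lambda>\<^sup>k\<close> together
  contribute at least \<open>2\<close> per pair, with equality exactly under \<open>interval_cond\<close>.\<close>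

lemma interval_iff:
  assumes k: "\<not> int e dvd int k" and px: "mono_data e n p x"
  shows "mono_mat e n p x \<in> interval e n (lam e n ^\<^sub>m k) \<longleftrightarrow> interval_cond e n (int k) p x"
proof -
  let ?L = "lam_exp n k"
  let ?f = "\<lambda>(a, b). pair_weight e (p a) (p b) (x b) + pair_weight e (p a) (p b) (?L b - x b)"
  have Lb: "?L b = int k" if "(a, b) \<in> index_pairs n" for a b
    using that by (simp add: index_pairs_def lam_exp_def)
  have neq: "p a \<noteq> p b" if "(a, b) \<in> index_pairs n" for a b
    using that px bij_betw_lessThan_neq[of p n] by (auto simp: index_pairs_def mono_data_def)
  have "mono_len e n p x + mono_len e n p (\<lambda>a. ?L a - x a) = sum ?f (index_pairs n)"
    unfolding mono_len_def by (simp add: sum.distrib[symmetric] split_def)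
  then have "mono_mat e n p x \<in> interval e n (lam e n ^\<^sub>m k) \<longleftrightarrow> sum ?f (index_pairs n) = (\<Sum>q\<in>index_pairs n. 2)"
    unfolding interval_def prefix_le_def
    using mono_mat_in_Geen[OF e_pos] px mono_data_lam_exp n_ge_2 lam_pow_eq_mono_mat wlen_mono_mat[OF px]
      wlen_lam_pow[OF k] wlen_ginv_mult_lam_pow[OF px] by simp
  also have "\<dots> \<longleftrightarrow> (\<forall>q\<in>index_pairs n. ?f q = 2)"
    using sum_mono_inv[of "\<lambda>_. 2" "index_pairs n" ?f] pair_weight_complement(1)[OF k neq] Lb
    by (auto intro: sum.cong)
  also have "\<dots> \<longleftrightarrow> interval_cond e n (int k) p x"
  proof -
    have "?f (a, b) = 2 \<longleftrightarrow> (p a < p b \<longrightarrow> int e dvd x b \<or> int e dvd (int k - x b))"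
      if "(a, b) \<in> index_pairs n" for a b
      using pair_weight_complement(2)[OF k neq[OF that]] Lb[OF that] by simp
    then show ?thesis
      unfolding interval_cond_def by (auto simp: index_pairs_def)
  qed
  finally show ?thesis .
qed

end

section \<open>Joins of two generators\<close>

lemma pair_weight_braid:
  assumes "u \<noteq> v" "v \<noteq> w" "u \<noteq> w"
    and "pair_weight e v u z\<^sub>0 + 1 = pair_weight e u v z\<^sub>1" "pair_weight e w v z\<^sub>1 + 1 = pair_weight e v w z\<^sub>2"
  shows "pair_weight e w u z\<^sub>0 + 1 = pair_weight e u w z\<^sub>2"
  using assms by (auto simp: pair_weight_def split: if_splits)

lemma left_descents_0:
  assumes p: "bij_betw p {..<n} {..<n}" and n: "Suc 0 < n" and ij: "\<not> int e dvd (i - j)"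
    and di: "left_descent e 0 i p x" and dj: "left_descent e 0 j p x"
  shows "p 0 < p 1" and "\<not> int e dvd x 1"
proof -
  have "\<not> p 1 < p 0"
  proof
    assume "p 1 < p 0"
    then have "int e dvd (i + x 0)" "int e dvd (j + x 0)"
      using di dj by (simp_all add: left_descent_def pair_weight_def gen_exp_def split: if_splits)
    then show False
      using ij by (metis add_diff_cancel_right diff_diff_eq2 dvd_diff)
  qed
  moreover have "p 0 \<noteq> p 1"
    using p n bij_betw_lessThan_neq[of p n 0 1] by simp
  ultimately show p01: "p 0 < p 1"
    by simp
  then show "\<not> int e dvd x 1"
    using di by (auto simp: left_descent_def pair_weight_def gen_exp_def split: if_splits)
qed

lemma lub_both_sym: "lub_both e n k x y z \<Longrightarrow> lub_both e n k y x z"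
  unfolding lub_both_def is_lub_def by blast

context geen_group
begin

lemma gen_mat_mult_gen_mat:
  assumes "Suc r < n" "Suc s < n"
  shows "gen_mat e n r i * gen_mat e n s j
    = mono_mat e n (act_perm r (act_perm s id)) (act_exp r i (act_exp s j (\<lambda>_. 0)))"
  using gen_mat_mult[OF assms(1), of e i "act_perm s id" "act_exp s j (\<lambda>_. 0)"]
  by (simp only: gen_mat_eq_act[of e n s j, symmetric])

lemma gen_mat_mult3:
  assumes "Suc r < n" "Suc s < n" "Suc t < n"
  shows "gen_mat e n r i * gen_mat e n s j * gen_mat e n t l
    = mono_mat e n (act_perm r (act_perm s (act_perm t id))) (act_exp r i (act_exp s j (act_exp t l (\<lambda>_. 0))))"
proof -
  have "gen_mat e n r i * gen_mat e n s j * gen_mat e n t l = gen_mat e n r i * (gen_mat e n s j * gen_mat e n t l)"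
    by (simp add: assoc_mult_mat[of _ n n _ n _ n] gen_mat_def)
  then show ?thesis
    using assms by (simp add: gen_mat_mult_gen_mat gen_mat_mult)
qed

lemma wlen_gen_mat_mult_gen_mat:
  assumes "Suc r < n" "Suc s < n" "r \<noteq> s"
  shows "wlen e n (gen_mat e n r i * gen_mat e n s j) = 2"
proof -
  have "mono_len e n (act_perm s id) (act_exp s j (\<lambda>_. 0)) = 1"
    using mono_len_act_ascent[of s n id e "\<lambda>_. 0" j] assms(2) by (simp add: mono_len_id)
  moreover have "act_perm s id r < act_perm s id (Suc r)" "int e dvd act_exp s j (\<lambda>_. 0) (Suc r)"
    using assms(3) by (auto simp: act_perm_def act_exp_def transpose_def gen_exp_def)
  ultimately have "mono_len e n (act_perm r (act_perm s id)) (act_exp r i (act_exp s j (\<lambda>_. 0))) = 2"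
    using mono_len_act_ascent[OF assms(1)] by simp
  then show ?thesis
    using assms gen_mat_mult_gen_mat wlen_mono_mat mono_data_act mono_data_id by simp
qed

lemma prefix_le_mult_prefix:
  assumes "prefix_le e n u w" "prefix_le e n v (ginv e n u * w)"
    and "wlen e n (u * v) = wlen e n u + wlen e n v"
  shows "prefix_le e n (u * v) w"
proof -
  have G: "u \<in> Geen e n" "v \<in> Geen e n" "w \<in> Geen e n"
    using assms by (auto simp: prefix_le_def)
  have C: "u \<in> carrier_mat n n" "v \<in> carrier_mat n n" "w \<in> carrier_mat n n"
    "ginv e n u \<in> carrier_mat n n" "ginv e n v \<in> carrier_mat n n"
    using G ginv_Geen Geen_carrier by blast+
  have "ginv e n (u * v) * w = ginv e n v * (ginv e n u * w)"
    using ginv_mult[OF G(1,2)] C by (simp add: assoc_mult_mat[of _ n n _ n _ n])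
  then show ?thesis
    using assms G Geen_mult by (simp add: prefix_le_def)
qed

lemma prefix_le_gen_mat_mult:
  assumes r: "Suc r < n" and px: "mono_data e n p x" and d: "left_descent e r i p x"
    and z: "prefix_le e n z (mono_mat e n (act_perm r p) (act_exp r i x))"
    and len: "wlen e n (gen_mat e n r i * z) = wlen e n z + 1"
  shows "prefix_le e n (gen_mat e n r i * z) (mono_mat e n p x)"
  using prefix_le_mult_prefix[OF prefix_le_gen_mat_iff[OF r px, THEN iffD2, OF d]] z len
  by (simp add: ginv_gen_mat[OF r] gen_mat_mult[OF r] wlen_gen_mat[OF r])

lemma lub_both_of_involutions:
  assumes G: "x \<in> Geen e n" "y \<in> Geen e n"
    and inv: "ginv e n x = x" "ginv e n y = y" "ginv e n z = z"
    and z: "z \<in> interval e n (lam e n ^\<^sub>m k)" "prefix_le e n x z" "prefix_le e n y z"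
    and least: "\<And>w. w \<in> Geen e n \<Longrightarrow> prefix_le e n x w \<Longrightarrow> prefix_le e n y w \<Longrightarrow> prefix_le e n z w"
  shows "lub_both e n k x y z"
proof -
  have zG: "z \<in> Geen e n"
    using z(1) by (simp add: interval_def)
  have suffix: "suffix_le e n u w \<longleftrightarrow> prefix_le e n u (ginv e n w)"
    if "u \<in> {x, y, z}" "w \<in> Geen e n" for u w
    using suffix_le_iff_prefix_le_ginv[of u w] that G zG inv by auto
  show ?thesis
    unfolding lub_both_def is_lub_def
    using z least suffix inv ginv_Geen(1) by (auto simp: interval_def)
qed

lemma far_gen_mats_commute:
  assumes "Suc r < s" "Suc s < n"
  shows "gen_mat e n r i * gen_mat e n s 0 = gen_mat e n s 0 * gen_mat e n r i"
proof -
  have "act_perm r (act_perm s id) = act_perm s (act_perm r id)"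
    "act_exp r i (act_exp s 0 (\<lambda>_. 0)) = act_exp s 0 (act_exp r i (\<lambda>_. 0))"
    using assms by (auto simp: fun_eq_iff act_perm_def act_exp_def gen_exp_def transpose_def)
  then show ?thesis
    using assms by (simp add: gen_mat_mult_gen_mat)
qed

lemma far_gen_mats_prod:
  assumes "Suc r < s" "Suc s < n"
  obtains p x where "gen_mat e n r i * gen_mat e n s 0 = mono_mat e n p x" "mono_data e n p x"
    "\<And>\<kappa>. interval_cond e n \<kappa> p x"
proof
  let ?p = "act_perm r (act_perm s id)" and ?x = "act_exp r i (act_exp s 0 (\<lambda>_. 0))"
  show "gen_mat e n r i * gen_mat e n s 0 = mono_mat e n ?p ?x"
    using assms by (simp add: gen_mat_mult_gen_mat)
  show "mono_data e n ?p ?x"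
    using assms by (intro mono_data_act mono_data_id) auto
  have "?x = gen_exp r i" "?p r = Suc r" "?p (Suc r) = r"
    using assms by (auto simp: fun_eq_iff act_exp_def act_perm_def)
  then show "interval_cond e n \<kappa> ?p ?x" for \<kappa>
    unfolding interval_cond_def by (metis gen_exp_def dvd_0_right One_nat_def less_one not_less_zero)
qed

lemma far_gen_mats_least:
  assumes r: "Suc r < s" and s: "Suc s < n" and w: "w \<in> Geen e n"
    and A: "prefix_le e n (gen_mat e n r i) w" and B: "prefix_le e n (gen_mat e n s 0) w"
  shows "prefix_le e n (gen_mat e n r i * gen_mat e n s 0) w"
proof -
  obtain p x where px: "mono_data e n p x" "w = mono_mat e n p x"
    using Geen_elim[OF e_pos w] .
  have r': "Suc r < n"
    using r s by simp
  have "left_descent e s 0 p x"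
    using B prefix_le_gen_mat_iff[OF s px(1)] px(2) by simp
  then have "left_descent e s 0 (act_perm r p) (act_exp r i x)"
    using r by (simp add: left_descent_def gen_exp_def)
  then have "prefix_le e n (gen_mat e n s 0) (mono_mat e n (act_perm r p) (act_exp r i x))"
    using prefix_le_gen_mat_iff[OF s mono_data_act[OF r' px(1)]] by simp
  moreover have "left_descent e r i p x"
    using A prefix_le_gen_mat_iff[OF r' px(1)] px(2) by simp
  moreover have "wlen e n (gen_mat e n r i * gen_mat e n s 0) = wlen e n (gen_mat e n s 0) + 1"
    using wlen_gen_mat_mult_gen_mat[OF r' s] wlen_gen_mat[OF s] r by simp
  ultimately show ?thesis
    using prefix_le_gen_mat_mult[OF r' px(1)] px(2) by simp
qed

lemma braid_gen_mats:
  assumes "Suc (Suc r) < n"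
  shows "gen_mat e n r i * gen_mat e n (Suc r) 0 * gen_mat e n r i
       = gen_mat e n (Suc r) 0 * gen_mat e n r i * gen_mat e n (Suc r) 0"
proof -
  have "act_perm r (act_perm (Suc r) (act_perm r id)) = act_perm (Suc r) (act_perm r (act_perm (Suc r) id))"
    "act_exp r i (act_exp (Suc r) 0 (act_exp r i (\<lambda>_. 0))) = act_exp (Suc r) 0 (act_exp r i (act_exp (Suc r) 0 (\<lambda>_. 0)))"
    by (auto simp: fun_eq_iff act_perm_def act_exp_def gen_exp_def transpose_def)
  then show ?thesis
    using assms by (simp add: gen_mat_mult3)
qed

lemma braid_gen_mats_prod:
  assumes r: "Suc (Suc r) < n"
  obtains p x where "gen_mat e n r i * gen_mat e n (Suc r) 0 * gen_mat e n r i = mono_mat e n p x"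
    "mono_data e n p x" "mono_len e n p x = 3" "\<And>\<kappa>. interval_cond e n \<kappa> p x"
proof
  let ?p1 = "act_perm r id" and ?x1 = "act_exp r i (\<lambda>_. 0)"
  let ?p2 = "act_perm (Suc r) ?p1" and ?x2 = "act_exp (Suc r) 0 ?x1"
  let ?p = "act_perm r ?p2" and ?x = "act_exp r i ?x2"
  have r': "Suc r < n"
    using r by simp
  show "gen_mat e n r i * gen_mat e n (Suc r) 0 * gen_mat e n r i = mono_mat e n ?p ?x"
    using r r' by (simp add: gen_mat_mult3)
  show "mono_data e n ?p ?x"
    using r by (intro mono_data_act mono_data_id; simp)+
  have "mono_len e n ?p1 ?x1 = 1"
    using mono_len_act_ascent[of r n id e "\<lambda>_. 0" i] r' by (simp add: mono_len_id)
  then have "mono_len e n ?p2 ?x2 = 2"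
    using mono_len_act_ascent[of "Suc r" n ?p1 e ?x1 0] r by (simp add: gen_exp_eq_0)
  then show "mono_len e n ?p ?x = 3"
    using mono_len_act_ascent[of r n ?p2 e ?x2 i] r' by (simp add: gen_exp_eq_0)
  have x: "?x b = (if r = 0 \<and> b = 2 then i else 0)" if "0 < b" for b
    using that by (auto simp: act_exp_def gen_exp_def transpose_def)
  have p: "?p 0 = 2 \<and> ?p 1 = 1 \<and> ?p 2 = 0" if "r = 0"
    using that by (simp add: act_perm_def transpose_def)
  show "interval_cond e n \<kappa> ?p ?x" for \<kappa>
    unfolding interval_cond_def
  proof (intro allI impI)
    fix a b assume ab: "a < b" "b < n" "?p a < ?p b"
    have "\<not> (r = 0 \<and> b = 2)"
    proof
      assume rb: "r = 0 \<and> b = 2"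
      then have "a = 0 \<or> a = 1"
        using ab(1) by auto
      then show False
        using ab(3) p rb by auto
    qed
    then have "?x b = 0"
      using x[of b] ab(1) by auto
    then show "int e dvd ?x b \<or> int e dvd (\<kappa> - ?x b)"
      by simp
  qed
qed

lemma braid_gen_mats_least:
  assumes r: "Suc (Suc r) < n" and w: "w \<in> Geen e n"
    and A: "prefix_le e n (gen_mat e n r i) w" and B: "prefix_le e n (gen_mat e n (Suc r) 0) w"
  shows "prefix_le e n (gen_mat e n r i * gen_mat e n (Suc r) 0 * gen_mat e n r i) w"
proof -
  let ?A = "gen_mat e n r i" and ?B = "gen_mat e n (Suc r) 0"
  obtain p x where px: "mono_data e n p x" "w = mono_mat e n p x"
    using Geen_elim[OF e_pos w] .
  let ?p1 = "act_perm r p" and ?x1 = "act_exp r i x"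
  have r': "Suc r < n"
    using r by simp
  have D: "mono_data e n ?p1 ?x1"
    using r' px(1) by (rule mono_data_act)
  have dA: "left_descent e r i p x" and dB: "left_descent e (Suc r) 0 p x"
    using A B prefix_le_gen_mat_iff[OF r' px(1)] prefix_le_gen_mat_iff[OF r px(1)] px(2) by simp_all
  have neq: "p r \<noteq> p (Suc r)" "p (Suc r) \<noteq> p (Suc (Suc r))" "p r \<noteq> p (Suc (Suc r))"
    using px(1) r bij_betw_lessThan_neq[of p n] by (auto simp: mono_data_def)
  have dA': "pair_weight e (p (Suc r)) (p r) (gen_exp r i (Suc r) + x r) + 1 = pair_weight e (p r) (p (Suc r)) (x (Suc r))"
    using dA by (simp add: left_descent_def)
  have dB': "pair_weight e (p (Suc (Suc r))) (p (Suc r)) (x (Suc r)) + 1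
      = pair_weight e (p (Suc r)) (p (Suc (Suc r))) (x (Suc (Suc r)))"
    using dB by (simp add: left_descent_def)
  have "left_descent e (Suc r) 0 ?p1 ?x1"
    using pair_weight_braid[OF neq dA' dB'] by (simp add: left_descent_def gen_exp_eq_0)
  moreover have "left_descent e r i (act_perm (Suc r) ?p1) (act_exp (Suc r) 0 ?x1)"
    using dB' by (simp add: left_descent_def gen_exp_eq_0 gen_exp_swap)
  then have "prefix_le e n ?A (mono_mat e n (act_perm (Suc r) ?p1) (act_exp (Suc r) 0 ?x1))"
    using prefix_le_gen_mat_iff[OF r' mono_data_act[OF r D]] by simp
  moreover have "wlen e n (?B * ?A) = wlen e n ?A + 1"
    using wlen_gen_mat_mult_gen_mat[OF r r'] wlen_gen_mat[OF r'] by simp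
  ultimately have "prefix_le e n (?B * ?A) (mono_mat e n ?p1 ?x1)"
    using prefix_le_gen_mat_mult[OF r D] by simp
  moreover obtain q y where "?A * ?B * ?A = mono_mat e n q y" "mono_data e n q y" "mono_len e n q y = 3"
    using braid_gen_mats_prod[OF r] .
  then have "wlen e n (?A * (?B * ?A)) = wlen e n (?B * ?A) + 1"
    using wlen_mono_mat wlen_gen_mat_mult_gen_mat[OF r r']
    by (simp add: assoc_mult_mat[of _ n n _ n _ n] gen_mat_def)
  ultimately have "prefix_le e n (?A * (?B * ?A)) w"
    using prefix_le_gen_mat_mult[OF r' px(1) dA] px(2) by simp
  then show ?thesis
    by (simp add: assoc_mult_mat[of _ n n _ n _ n] gen_mat_def)
qed

lemma gen_mat_0_mult_eq:
  assumes "a - b = c - d"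
  shows "gen_mat e n 0 a * gen_mat e n 0 b = gen_mat e n 0 c * gen_mat e n 0 d"
proof -
  have "act_exp 0 a (act_exp 0 b (\<lambda>_. 0)) = act_exp 0 c (act_exp 0 d (\<lambda>_. 0))"
    using assms by (auto simp: fun_eq_iff act_exp_def gen_exp_def transpose_def algebra_simps)
  then show ?thesis
    using n_ge_2 by (simp add: gen_mat_mult_gen_mat)
qed

lemma gen_mat_0_cong: "int e dvd (i - j) \<Longrightarrow> gen_mat e n 0 i = gen_mat e n 0 j"
  unfolding gen_mat_def using n_ge_2
  by (subst mono_mat_eq_iff[OF e_pos]) (auto simp: transpose_def gen_exp_def mod_eq_dvd_iff dvd_diff_commute)

lemma gen_mat_0_mult_prod:
  assumes "\<not> int e dvd (a - b)"
  obtains p x where "gen_mat e n 0 a * gen_mat e n 0 b = mono_mat e n p x" "mono_data e n p x"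
    "mono_len e n p x = 2" "\<And>\<kappa>. int e dvd (\<kappa> - (a - b)) \<Longrightarrow> interval_cond e n \<kappa> p x"
proof
  let ?p1 = "act_perm 0 id" and ?x1 = "act_exp 0 b (\<lambda>_. 0)"
  let ?p = "act_perm 0 ?p1" and ?x = "act_exp 0 a ?x1"
  have n1: "Suc 0 < n"
    using n_ge_2 by simp
  show "gen_mat e n 0 a * gen_mat e n 0 b = mono_mat e n ?p ?x"
    using n1 by (simp add: gen_mat_mult_gen_mat)
  show "mono_data e n ?p ?x"
    using n1 by (intro mono_data_act mono_data_id; simp)+
  have "mono_len e n ?p1 ?x1 = 1"
    using mono_len_act_ascent[of 0 n id e "\<lambda>_. 0" b] n1 by (simp add: mono_len_id)
  then show "mono_len e n ?p ?x = 2"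
    using mono_len_act[OF n1, of e ?p1 a ?x1] assms
    by (simp add: pair_weight_def gen_exp_def act_exp_def)
  have "?p = id"
    by (simp add: fun_eq_iff act_perm_def)
  moreover have "?x 1 = a - b" "?x c = 0" if "1 < c" for c
    using that by (auto simp: act_exp_def gen_exp_def)
  ultimately show "interval_cond e n \<kappa> ?p ?x" if "int e dvd (\<kappa> - (a - b))" for \<kappa>
    unfolding interval_cond_def using that
    by (metis One_nat_def dvd_0_right less_one nat_neq_iff not_less_zero)
qed

text \<open>Two different \<open>t\<close>'s are descents only if rows 0 and 1 are in order with a nontrivial
  root in row 1; below \<open>\<lambda>\<^sup>\<kappa>\<close> that root is \<open>\<zeta>\<^sup>\<kappa>\<close>, which makes \<open>t\<^sub>a t\<^sub>b\<close> with
  \<open>a - b = \<kappa>\<close> a prefix as well.\<close>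

lemma gen_mat_0_mult_least:
  assumes px: "mono_data e n p x" "interval_cond e n \<kappa> p x"
    and ij: "\<not> int e dvd (i - j)"
    and Ti: "prefix_le e n (gen_mat e n 0 i) (mono_mat e n p x)"
    and Tj: "prefix_le e n (gen_mat e n 0 j) (mono_mat e n p x)"
    and ab: "int e dvd (a - b - \<kappa>)" "\<not> int e dvd (a - b)"
  shows "prefix_le e n (gen_mat e n 0 a * gen_mat e n 0 b) (mono_mat e n p x)"
proof -
  have n1: "Suc 0 < n"
    using n_ge_2 by simp
  have "bij_betw p {..<n} {..<n}"
    using px(1) by (simp add: mono_data_def)
  then have p01: "p 0 < p 1" and x1: "\<not> int e dvd x 1"
    using left_descents_0[OF _ n1 ij] Ti Tj prefix_le_gen_mat_iff[OF n1 px(1)] by simp_all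
  then have "int e dvd (\<kappa> - x 1)"
    using px(2) p01 n1 unfolding interval_cond_def by auto
  then have "int e dvd (a - b - x 1)"
    using dvd_add[OF _ ab(1)] by fastforce
  moreover have "b + (- a + x 1) = - (a - b - x 1)"
    by simp
  ultimately have "int e dvd (b + (- a + x 1))"
    using dvd_minus_iff by metis
  then have "left_descent e 0 b (act_perm 0 p) (act_exp 0 a x)"
    using p01 by (simp add: left_descent_def pair_weight_def gen_exp_def)
  then have "prefix_le e n (gen_mat e n 0 b) (mono_mat e n (act_perm 0 p) (act_exp 0 a x))"
    using prefix_le_gen_mat_iff[OF n1 mono_data_act[OF n1 px(1)]] by simp
  moreover have "left_descent e 0 a p x"
    using p01 x1 by (simp add: left_descent_def pair_weight_def gen_exp_def)
  moreover obtain q y where "gen_mat e n 0 a * gen_mat e n 0 b = mono_mat e n q y" "mono_data e n q y"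
    "mono_len e n q y = 2"
    using gen_mat_0_mult_prod[OF ab(2)] .
  then have "wlen e n (gen_mat e n 0 a * gen_mat e n 0 b) = wlen e n (gen_mat e n 0 b) + 1"
    using wlen_mono_mat wlen_gen_mat[OF n1] by simp
  ultimately show ?thesis
    using prefix_le_gen_mat_mult[OF n1 px(1)] by simp
qed

lemma tgen_mult_tgen_eq: "tgen e n (int k) * tgen e n 0 = tgen e n i * tgen e n (i - int k)"
  using gen_mat_0_mult_eq by (simp add: tgen_eq_gen_mat[OF n_ge_2])

lemma tgen_sgen_3_braid:
  "3 \<le> n \<Longrightarrow> tgen e n i * sgen n 3 * tgen e n i = sgen n 3 * tgen e n i * sgen n 3"
  using braid_gen_mats[of 0 i] by (simp add: tgen_eq_gen_mat[OF n_ge_2] sgen_eq_gen_mat_diff[where e = e])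

lemma tgen_sgen_commute: "4 \<le> j \<Longrightarrow> j \<le> n \<Longrightarrow> tgen e n i * sgen n j = sgen n j * tgen e n i"
  using far_gen_mats_commute[of 0 "j - 2" i] by (simp add: tgen_eq_gen_mat[OF n_ge_2] sgen_eq_gen_mat_diff[where e = e])

lemma sgen_Suc_braid:
  assumes "3 \<le> i" "i \<le> n - 1"
  shows "sgen n i * sgen n (i + 1) * sgen n i = sgen n (i + 1) * sgen n i * sgen n (i + 1)"
proof -
  have "i + 1 - 2 = Suc (i - 2)"
    using assms by simp
  then show ?thesis
    using braid_gen_mats[of "i - 2" 0] assms by (simp add: sgen_eq_gen_mat_diff[where e = e])
qed

lemma sgen_far_commute:
  assumes "3 \<le> i" "i \<le> n" "3 \<le> j" "j \<le> n" "i + 1 < j \<or> j + 1 < i"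
  shows "sgen n i * sgen n j = sgen n j * sgen n i"
proof -
  have si: "sgen n i = gen_mat e n (i - 2) 0" and sj: "sgen n j = gen_mat e n (j - 2) 0"
    using assms sgen_eq_gen_mat_diff by auto
  consider "Suc (i - 2) < j - 2" "Suc (j - 2) < n" | "Suc (j - 2) < i - 2" "Suc (i - 2) < n"
    using assms by linarith
  then show ?thesis
    unfolding si sj by cases (metis far_gen_mats_commute)+
qed

end

section \<open>Least upper bounds in \<open>[1, \<lambda>\<^sup>k]\<close>\<close>

locale geen_interval = geen_group +
  fixes k :: nat
  assumes k_not_dvd: "\<not> int e dvd int k"
begin

lemma mono_mat_in_interval:
  "mono_data e n p x \<Longrightarrow> interval_cond e n (int k) p x \<Longrightarrow> mono_mat e n p x \<in> interval e n (lam e n ^\<^sub>m k)"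
  using interval_iff[OF k_not_dvd] by simp

lemma lub_both_far_gen_mats:
  assumes r: "Suc r < s" and s: "Suc s < n"
  shows "lub_both e n k (gen_mat e n r i) (gen_mat e n s 0) (gen_mat e n r i * gen_mat e n s 0)"
proof -
  let ?A = "gen_mat e n r i" and ?B = "gen_mat e n s 0"
  have r': "Suc r < n"
    using r s by simp
  note G = gen_mat_in_Geen[OF r'] gen_mat_in_Geen[OF s]
  note inv = ginv_gen_mat[OF r'] ginv_gen_mat[OF s]
  have "wlen e n (?A * ?B) = wlen e n ?A + wlen e n ?B"
    using wlen_gen_mat_mult_gen_mat[OF r' s] wlen_gen_mat r' s r by simp
  then have A: "prefix_le e n ?A (?A * ?B)"
    using prefix_le_mult G by blast
  have "wlen e n (?B * ?A) = wlen e n ?B + wlen e n ?A"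
    using wlen_gen_mat_mult_gen_mat[OF s r'] wlen_gen_mat r' s r by simp
  then have "prefix_le e n ?B (?B * ?A)"
    using prefix_le_mult G by blast
  then have B: "prefix_le e n ?B (?A * ?B)"
    unfolding far_gen_mats_commute[OF r s] .
  have "ginv e n (?A * ?B) = ?B * ?A"
    using ginv_mult[OF G] inv by simp
  then have z_inv: "ginv e n (?A * ?B) = ?A * ?B"
    unfolding far_gen_mats_commute[OF r s] .
  obtain p x where "?A * ?B = mono_mat e n p x" "mono_data e n p x" "interval_cond e n (int k) p x"
    using far_gen_mats_prod[OF r s] by metis
  then have "?A * ?B \<in> interval e n (lam e n ^\<^sub>m k)"
    using mono_mat_in_interval by simp
  then show ?thesis
    using lub_both_of_involutions[OF G inv z_inv _ A B] far_gen_mats_least[OF r s] by blast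
qed

lemma lub_both_braid_gen_mats:
  assumes r: "Suc (Suc r) < n"
  shows "lub_both e n k (gen_mat e n r i) (gen_mat e n (Suc r) 0)
    (gen_mat e n r i * gen_mat e n (Suc r) 0 * gen_mat e n r i)"
proof -
  let ?A = "gen_mat e n r i" and ?B = "gen_mat e n (Suc r) 0"
  have r': "Suc r < n"
    using r by simp
  note G = gen_mat_in_Geen[OF r'] gen_mat_in_Geen[OF r]
  note inv = ginv_gen_mat[OF r'] ginv_gen_mat[OF r]
  have assoc: "X * Y * Z = X * (Y * Z)" if "X \<in> Geen e n" "Y \<in> Geen e n" "Z \<in> Geen e n" for X Y Z
    using that Geen_carrier assoc_mult_mat[of X n n Y n Z n] by blast
  obtain p x where px: "?A * ?B * ?A = mono_mat e n p x" "mono_data e n p x" "mono_len e n p x = 3"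
    "interval_cond e n (int k) p x"
    using braid_gen_mats_prod[OF r] by metis
  have len3: "wlen e n (?A * ?B * ?A) = 3"
    using px wlen_mono_mat by simp
  have "wlen e n (?A * (?B * ?A)) = wlen e n ?A + wlen e n (?B * ?A)"
    using len3 assoc[OF G(1) G(2) G(1)] wlen_gen_mat_mult_gen_mat[OF r r'] wlen_gen_mat[OF r'] by simp
  then have A: "prefix_le e n ?A (?A * ?B * ?A)"
    using prefix_le_mult[OF G(1) Geen_mult[OF G(2) G(1)]] assoc[OF G(1) G(2) G(1)] by simp
  have "wlen e n (?B * (?A * ?B)) = wlen e n ?B + wlen e n (?A * ?B)"
    using len3 assoc[OF G(2) G(1) G(2)] braid_gen_mats[OF r] wlen_gen_mat_mult_gen_mat[OF r' r]
      wlen_gen_mat[OF r] by simp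
  then have B: "prefix_le e n ?B (?A * ?B * ?A)"
    using prefix_le_mult[OF G(2) Geen_mult[OF G(1) G(2)]] assoc[OF G(2) G(1) G(2)] braid_gen_mats[OF r]
    by simp
  have "ginv e n (?A * ?B * ?A) = ?A * (?B * ?A)"
    using ginv_mult[OF Geen_mult[OF G] G(1)] ginv_mult[OF G] inv by simp
  then have z_inv: "ginv e n (?A * ?B * ?A) = ?A * ?B * ?A"
    using assoc[OF G(1) G(2) G(1)] by simp
  have "?A * ?B * ?A \<in> interval e n (lam e n ^\<^sub>m k)"
    using px mono_mat_in_interval by simp
  then show ?thesis
    using lub_both_of_involutions[OF G inv z_inv _ A B] braid_gen_mats_least[OF r] by blast
qed

lemma lub_both_gen_mat_0:
  assumes ij: "\<not> int e dvd (i - j)"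
  shows "lub_both e n k (gen_mat e n 0 i) (gen_mat e n 0 j) (gen_mat e n 0 (int k) * gen_mat e n 0 0)"
proof -
  let ?T = "gen_mat e n 0" and ?I = "interval e n (lam e n ^\<^sub>m k)"
  let ?z = "?T (int k) * ?T 0"
  have n1: "Suc 0 < n"
    using n_ge_2 by simp
  have T: "?T a \<in> Geen e n" "ginv e n (?T a) = ?T a" for a
    using gen_mat_in_Geen[OF n1] ginv_gen_mat[OF n1] by auto
  have len: "wlen e n (?T a * ?T b) = wlen e n (?T a) + wlen e n (?T b)" if "\<not> int e dvd (a - b)" for a b
    using gen_mat_0_mult_prod[OF that] wlen_mono_mat wlen_gen_mat[OF n1] by (metis one_add_one)
  have z: "?z \<in> ?I"
    using gen_mat_0_mult_prod[of "int k" 0] k_not_dvd mono_mat_in_interval by (metis diff_0_right diff_self dvd_0_right)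
  have prefix: "prefix_le e n (?T a) ?z" for a
    using prefix_le_mult[OF T(1) T(1) len] gen_mat_0_mult_eq[of "int k" 0 a "a - int k"] k_not_dvd by simp
  have suffix: "suffix_le e n (?T a) ?z" for a
    using suffix_le_mult[OF T(1) T(1) len] gen_mat_0_mult_eq[of "int k" 0 "a + int k" a] k_not_dvd by simp
  have least: "prefix_le e n ?z w" if "w \<in> ?I" "prefix_le e n (?T i) w" "prefix_le e n (?T j) w" for w
  proof -
    have "w \<in> Geen e n"
      using that(1) by (simp add: interval_def)
    then obtain p x where px: "mono_data e n p x" "w = mono_mat e n p x"
      using Geen_elim[OF e_pos] by blast
    then show ?thesis
      using that interval_iff[OF k_not_dvd px(1)] gen_mat_0_mult_least[OF px(1) _ ij] k_not_dvd by simp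
  qed
  have least_suffix: "suffix_le e n ?z w" if "w \<in> ?I" "suffix_le e n (?T i) w" "suffix_le e n (?T j) w" for w
  proof -
    have "w \<in> Geen e n"
      using that(1) by (simp add: interval_def)
    then obtain p x where px: "mono_data e n p x" "w = mono_mat e n p x"
      using Geen_elim[OF e_pos] by blast
    have p: "bij_betw p {..<n} {..<n}"
      using px(1) by (simp add: mono_data_def)
    have "interval_cond e n (- int k) (inv_into {..<n} p) (\<lambda>c. - x (inv_into {..<n} p c))"
      using interval_cond_inverse[OF p] interval_iff[OF k_not_dvd px(1)] that(1) px(2) by simp
    moreover have "prefix_le e n (?T a) (ginv e n w)" if "suffix_le e n (?T a) w" for a
      using that suffix_le_iff_prefix_le_ginv[OF T(1)] px mono_mat_in_Geen[OF e_pos] T(2) by simp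
    ultimately have "prefix_le e n (?T 0 * ?T (int k)) (ginv e n w)"
      using gen_mat_0_mult_least[OF mono_data_inverse[OF px(1)] _ ij] that k_not_dvd px(2)
        ginv_mono_mat[OF px(1)] by simp
    moreover have "ginv e n ?z = ?T 0 * ?T (int k)"
      using ginv_mult[OF T(1) T(1)] T(2) by simp
    ultimately show ?thesis
      using suffix_le_iff_prefix_le_ginv[OF Geen_mult[OF T(1) T(1)]] px mono_mat_in_Geen[OF e_pos] by simp
  qed
  show ?thesis
    unfolding lub_both_def is_lub_def using z prefix suffix least least_suffix by blast
qed

lemma lub_both_exists_ordered:
  assumes "r < s" "Suc s < n"
  shows "\<exists>z. lub_both e n k (gen_mat e n r i) (gen_mat e n s j) z"
proof -
  obtain s' where s': "s = Suc s'"
    using assms(1) by (cases s) auto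
  have "gen_mat e n s j = gen_mat e n s 0"
    using s' gen_mat_Suc_eq by simp
  then show ?thesis
    using lub_both_braid_gen_mats[of r] lub_both_far_gen_mats[of r s] assms s'
    by (cases "s = Suc r") auto
qed

lemma lub_both_exists_gen_mat:
  assumes "Suc r < n" "Suc s < n" "gen_mat e n r i \<noteq> gen_mat e n s j"
  shows "\<exists>z. lub_both e n k (gen_mat e n r i) (gen_mat e n s j) z"
proof (cases r s rule: linorder_cases)
  case less
  then show ?thesis
    using lub_both_exists_ordered assms by blast
next
  case greater
  then show ?thesis
    using lub_both_exists_ordered lub_both_sym assms by blast
next
  case equal
  then have "r = 0"
    using assms(3) gen_mat_Suc_eq by (metis not0_implies_Suc)
  moreover have "\<not> int e dvd (i - j)"
    using assms(3) gen_mat_0_cong equal calculation by blast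
  ultimately show ?thesis
    using lub_both_gen_mat_0 equal by blast
qed

lemma lub_both_exists:
  "x \<in> Xgen e n \<Longrightarrow> y \<in> Xgen e n \<Longrightarrow> x \<noteq> y \<Longrightarrow> \<exists>z. lub_both e n k x y z"
  by (metis Xgen_elim n_ge_2 lub_both_exists_gen_mat)

lemma lub_both_tgen_tgen:
  assumes "0 \<le> i" "i < int e" "0 \<le> j" "j < int e" "i \<noteq> j"
  shows "lub_both e n k (tgen e n i) (tgen e n j) (tgen e n (int k) * tgen e n 0)"
proof -
  have "\<not> int e dvd (i - j)"
    using assms by (metis dvd_imp_mod_0 mod_pos_pos_trivial mod_eq_dvd_iff)
  then show ?thesis
    using lub_both_gen_mat_0 by (simp add: tgen_eq_gen_mat[OF n_ge_2])
qed

lemma lub_both_tgen_sgen_3: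
  "3 \<le> n \<Longrightarrow> lub_both e n k (tgen e n i) (sgen n 3) (tgen e n i * sgen n 3 * tgen e n i)"
  using lub_both_braid_gen_mats[of 0 i] by (simp add: tgen_eq_gen_mat[OF n_ge_2] sgen_eq_gen_mat_diff[where e = e])

lemma lub_both_tgen_sgen:
  "4 \<le> j \<Longrightarrow> j \<le> n \<Longrightarrow> lub_both e n k (tgen e n i) (sgen n j) (tgen e n i * sgen n j)"
  using lub_both_far_gen_mats[of 0 "j - 2" i] by (simp add: tgen_eq_gen_mat[OF n_ge_2] sgen_eq_gen_mat_diff[where e = e])

lemma lub_both_sgen_Suc:
  assumes "3 \<le> i" "i \<le> n - 1"
  shows "lub_both e n k (sgen n i) (sgen n (i + 1)) (sgen n i * sgen n (i + 1) * sgen n i)"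
proof -
  have "i + 1 - 2 = Suc (i - 2)"
    using assms by simp
  then show ?thesis
    using lub_both_braid_gen_mats[of "i - 2" 0] assms by (simp add: sgen_eq_gen_mat_diff[where e = e])
qed

lemma lub_both_sgen_far:
  assumes "3 \<le> i" "i \<le> n" "3 \<le> j" "j \<le> n" "i + 1 < j \<or> j + 1 < i"
  shows "lub_both e n k (sgen n i) (sgen n j) (sgen n i * sgen n j)"
proof -
  have si: "sgen n i = gen_mat e n (i - 2) 0" and sj: "sgen n j = gen_mat e n (j - 2) 0"
    using assms sgen_eq_gen_mat_diff by auto
  consider "Suc (i - 2) < j - 2" "Suc (j - 2) < n" | "Suc (j - 2) < i - 2" "Suc (i - 2) < n"
    using assms by linarith
  then show ?thesis
    unfolding si sj by cases (metis far_gen_mats_commute lub_both_far_gen_mats lub_both_sym)+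
qed

end

theorem mainTheorem7:
  fixes e n k :: nat
  assumes "2 \<le> e" and "2 \<le> n" and "1 \<le> k" and "k \<le> e - 1"
  shows "(\<forall>x\<in>Xgen e n. \<forall>y\<in>Xgen e n. x \<noteq> y \<longrightarrow> (\<exists>z. lub_both e n k x y z))
    \<and> (\<forall>i j :: int. 0 \<le> i \<and> i < int e \<and> 0 \<le> j \<and> j < int e \<and> i \<noteq> j \<longrightarrow>
          lub_both e n k (tgen e n i) (tgen e n j) (tgen e n (int k) * tgen e n 0)
        \<and> tgen e n (int k) * tgen e n 0 = tgen e n i * tgen e n (i - int k)
        \<and> tgen e n (int k) * tgen e n 0 = tgen e n j * tgen e n (j - int k))
    \<and> (3 \<le> n \<longrightarrow> (\<forall>i :: int. 0 \<le> i \<and> i < int e \<longrightarrow>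
          lub_both e n k (tgen e n i) (sgen n 3) (tgen e n i * sgen n 3 * tgen e n i)
        \<and> tgen e n i * sgen n 3 * tgen e n i = sgen n 3 * tgen e n i * sgen n 3))
    \<and> (\<forall>i :: int. \<forall>j. 0 \<le> i \<and> i < int e \<and> 4 \<le> j \<and> j \<le> n \<longrightarrow>
          lub_both e n k (tgen e n i) (sgen n j) (tgen e n i * sgen n j)
        \<and> tgen e n i * sgen n j = sgen n j * tgen e n i)
    \<and> (\<forall>i. 3 \<le> i \<and> i \<le> n - 1 \<longrightarrow>
          lub_both e n k (sgen n i) (sgen n (i + 1)) (sgen n i * sgen n (i + 1) * sgen n i)
        \<and> sgen n i * sgen n (i + 1) * sgen n i = sgen n (i + 1) * sgen n i * sgen n (i + 1))
    \<and> (\<forall>i j. 3 \<le> i \<and> i \<le> n \<and> 3 \<le> j \<and> j \<le> n \<and> (i + 1 < j \<or> j + 1 < i) \<longrightarrow>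
          lub_both e n k (sgen n i) (sgen n j) (sgen n i * sgen n j)
        \<and> sgen n i * sgen n j = sgen n j * sgen n i)"
proof -
  have "\<not> int e dvd int k"
    using assms by (simp add: nat_dvd_not_less)
  then interpret geen_interval e n k
    using assms by unfold_locales auto
  show ?thesis
    by (intro conjI allI impI ballI)
      (blast intro: lub_both_exists lub_both_tgen_tgen tgen_mult_tgen_eq lub_both_tgen_sgen_3 tgen_sgen_3_braid
        lub_both_tgen_sgen tgen_sgen_commute lub_both_sgen_Suc sgen_Suc_braid lub_both_sgen_far sgen_far_commute)+
qed

end
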